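(* Let $A$ be a group and $A_1=A\setminus\{1\}$. Let $X=\{x_i\mid i\in I\}$ with $I$ totally ordered. Let $$B=\mathrm{sgp}\langle X\cup X^{-1}\mid R\rangle,\qquad R=\{x_p^{\varepsilon}x_q^{\delta}=x_q^{\delta}x_p^{\varepsilon},\ x_q^{\varepsilon}x_q^{-\varepsilon}=1\mid \varepsilon,\delta=\pm1,\ p>q,\ p,q\in I\},$$ which is the free abelian group on $X$. A group $G$ is a Schreier extension of $A$ by $B$ if and only if the following data exist: - a factor set $\{(x_p^{\varepsilon},x_q^{\delta})\mid \varepsilon,\delta=\pm1,\ p>q\}\subseteq A$; - automorphisms $\psi_x$ of $A$ for $x\in X\cup X^{-1}$, written $a^x=\psi_x(a)$ with $a^{xy}=\psi_y(\psi_x(a))$; such that the following equations hold in $A$: 1. $(x_p^{\varepsilon},x_q^{\delta})\,(x_p^{\varepsilon},x_r^{\gamma})^{x_q^{\delta}}\,(x_q^{\delta},x_r^{\gamma})=(x_q^{\delta},x_r^{\gamma})^{x_p^{\varepsilon}}\,(x_p^{\varepsilon},x_r^{\gamma})\,(x_p^{\varepsilon},x_q^{\delta})^{x_r^{\gamma}}$, for all $p>q>r$ and $\varepsilon,\delta,\gamma=\pm1$; 2. $(x_p^{\varepsilon},x_q^{-\delta})\,(x_p^{\varepsilon},x_q^{\delta})^{x_q^{-\delta}}=1$, for all $p>q$ and $\varepsilon,\delta=\pm1$; 3. $(x_p^{\varepsilon},x_q^{\delta})^{x_p^{-\varepsilon}}\,(x_p^{-\varepsilon},x_q^{\delta})=1$,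 for all $p>q$ and $\varepsilon,\delta=\pm1$; 4. $a^{x_q^{\delta}x_p^{\varepsilon}}\,(x_p^{\varepsilon},x_q^{\delta})=(x_p^{\varepsilon},x_q^{\delta})\,a^{x_p^{\varepsilon}x_q^{\delta}}$, for all $p>q$, $\varepsilon,\delta=\pm1$ and $a\in A$; 5. $a^{x_r^{\varepsilon}x_r^{-\varepsilon}}=a$, for all $r\in I$, $\varepsilon=\pm1$ and $a\in A$; and moreover $$G\cong\mathrm{sgp}\langle A_1\cup X\cup X^{-1}\mid S\rangle,$$ where $$S=\{aa'=[aa'],\ ax^{\varepsilon}=x^{\varepsilon}a^{x^{\varepsilon}},\ x_p^{\varepsilon}x_q^{\delta}=x_q^{\delta}x_p^{\varepsilon}(x_p^{\varepsilon},x_q^{\delta}),\ x_q^{\varepsilon}x_q^{-\varepsilon}=1\mid a,a'\in A_1,\ x\in X,\ \varepsilon,\delta=\pm1,\ p>q\}.$$ Here $[aa']$ is the product in $A$, and elements equal to $1$ are read as the empty word.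
   Context: Basic definitions: - A Schreier extension of $A$ by $B$ is a group containing (a copy of) $A$ as a normal subgroup with quotient isomorphic to $B$. - $\mathrm{sgp}\langle X\mid S\rangle$ denotes the monoid presented by generators $X$ and relations $S$. - $X^{-1}=\{x_i^{-1}\mid i\in I\}$ is a set of new letters. *)

theory Defs
  imports "HOL-Algebra.Algebra"
begin

inductive pres_eq :: "'l set \<Rightarrow> ('l list \<times> 'l list) set \<Rightarrow> 'l list \<Rightarrow> 'l list \<Rightarrow> bool"
  for Y :: "'l set" and S :: "('l list \<times> 'l list) set" where
  pe_refl: "w \<in> lists Y \<Longrightarrow> pres_eq Y S w w"
| pe_sym: "pres_eq Y S u v \<Longrightarrow> pres_eq Y S v u"
| pe_trans: "pres_eq Y S u v \<Longrightarrow> pres_eq Y S v w \<Longrightarrow> pres_eq Y S u w"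
| pe_rel: "(l, r) \<in> S \<Longrightarrow> l \<in> lists Y \<Longrightarrow> r \<in> lists Y \<Longrightarrow> w1 \<in> lists Y \<Longrightarrow> w2 \<in> lists Y
           \<Longrightarrow> pres_eq Y S (w1 @ l @ w2) (w1 @ r @ w2)"

definition pres_class :: "'l set \<Rightarrow> ('l list \<times> 'l list) set \<Rightarrow> 'l list \<Rightarrow> 'l list set" where
  "pres_class Y S w = {v. pres_eq Y S w v}"

definition pres_monoid :: "'l set \<Rightarrow> ('l list \<times> 'l list) set \<Rightarrow> ('l list set) monoid" where
  "pres_monoid Y S =
     \<lparr> carrier = pres_class Y S ` lists Y,
       monoid.mult = (\<lambda>C D. {v. \<exists>u\<in>C. \<exists>w\<in>D. pres_eq Y S (u @ w) v}),
       one = pres_class Y S [] \<rparr>"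

definition schreier_ext :: "('g, 'c) monoid_scheme \<Rightarrow> ('a, 'd) monoid_scheme \<Rightarrow> ('b, 'e) monoid_scheme \<Rightarrow> bool" where
  "schreier_ext G A B \<longleftrightarrow> group G \<and>
     (\<exists>N. N \<lhd> G \<and> G\<lparr>carrier := N\<rparr> \<cong> A \<and> G Mod N \<cong> B)"

text \<open>Signs \<open>\<epsilon> = \<plusminus>1\<close> are encoded as booleans: True is +1, False is -1; \<open>-\<epsilon>\<close> is \<open>\<not>\<epsilon>\<close>.\<close>

datatype ('a, 'i) gletter = LA 'a | LX 'i bool

definition B_gens :: "'i set \<Rightarrow> ('i \<times> bool) set" where
  "B_gens I = I \<times> UNIV"

definition B_rels :: "('i::linorder) set \<Rightarrow> (('i \<times> bool) list \<times> ('i \<times> bool) list) set" where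
  "B_rels I =
     {([(p, e), (q, d)], [(q, d), (p, e)]) | p q e d. p \<in> I \<and> q \<in> I \<and> p > q}
   \<union> {([(q, e), (q, \<not> e)], []) | q e. q \<in> I}"

definition aword :: "('a, 'm) monoid_scheme \<Rightarrow> 'a \<Rightarrow> ('a, 'i) gletter list" where
  "aword A a = (if a = \<one>\<^bsub>A\<^esub> then [] else [LA a])"

definition G_gens :: "('a, 'm) monoid_scheme \<Rightarrow> 'i set \<Rightarrow> ('a, 'i) gletter set" where
  "G_gens A I = LA ` (carrier A - {\<one>\<^bsub>A\<^esub>}) \<union> {LX p e | p e. p \<in> I}"

text \<open>Relations S, with factor set f p e q d = (x_p^e, x_q^d) and psi p e = \<psi>_{x_p^e}.\<close>
definition G_rels :: "('a, 'm) monoid_scheme \<Rightarrow> ('i::linorder) set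
     \<Rightarrow> ('i \<Rightarrow> bool \<Rightarrow> 'i \<Rightarrow> bool \<Rightarrow> 'a) \<Rightarrow> ('i \<Rightarrow> bool \<Rightarrow> 'a \<Rightarrow> 'a)
     \<Rightarrow> (('a, 'i) gletter list \<times> ('a, 'i) gletter list) set" where
  "G_rels A I f psi =
     {([LA a, LA a'], aword A (a \<otimes>\<^bsub>A\<^esub> a')) | a a'. a \<in> carrier A - {\<one>\<^bsub>A\<^esub>} \<and> a' \<in> carrier A - {\<one>\<^bsub>A\<^esub>}}
   \<union> {([LA a, LX p e], LX p e # aword A (psi p e a)) | a p e. a \<in> carrier A - {\<one>\<^bsub>A\<^esub>} \<and> p \<in> I}
   \<union> {([LX p e, LX q d], [LX q d, LX p e] @ aword A (f p e q d)) | p q e d. p \<in> I \<and> q \<in> I \<and> p > q}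
   \<union> {([LX q e, LX q (\<not> e)], []) | q e. q \<in> I}"

end

theory Submission
  imports Defs
begin

(*
  Both directions rest on a normal form for the presented monoid
  P = sgp<A_1 u X u X^-1 | S>: every word equals in P a word x_v a, where v is
  a "normal word" of B (a reduced word whose letters are sorted by index; it is
  determined by its exponent sums) and a is an element of A.  Normal forms are
  computed by a right action of the letters on pairs (v, a), in the manner of
  van der Waerden's proof of normal forms for free products.  Conditions 1-5 on
  the factor set are exactly what makes this action respect the relations S,
  so the pair reached from a word is an invariant of its class in P.

  For "data => extension", the projection
  P -> B erasing the A-letters is onto with kernel A, and a short exact
  sequence yields a Schreier extension.  For "extension => data", coset
  representatives t_p of the generators x_p give conjugation automorphisms and
  a factor set, conditions 1-5 become identities in G, and evaluating words in
  G identifies G with P (injectivity again by the normal form).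
*)

section \<open>Monoid presentations\<close>

text \<open>Membership in \<open>lists Y\<close> is kept atomic rather than unfolded to a subset statement,
  so that it combines directly with the rules of the word congruence.\<close>
declare in_lists_conv_set [simp del]

lemma pres_eq_lists: "pres_eq Y S u v \<Longrightarrow> u \<in> lists Y \<and> v \<in> lists Y"
  by (induction rule: pres_eq.induct) auto

lemma pres_eq_cong:
  assumes "pres_eq Y S u v" "w1 \<in> lists Y" "w2 \<in> lists Y"
  shows "pres_eq Y S (w1 @ u @ w2) (w1 @ v @ w2)"
  using assms
proof (induction arbitrary: w1 w2 rule: pres_eq.induct)
  case (pe_refl w) then show ?case by (intro pres_eq.pe_refl) auto
next
  case (pe_sym u v) then show ?case by (auto intro: pres_eq.pe_sym)
next
  case (pe_trans u v w) then show ?case by (meson pres_eq.pe_trans)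
next
  case (pe_rel l r x1 x2)
  then show ?case using pres_eq.pe_rel[of l r S Y "w1 @ x1" "x2 @ w2"] by auto
qed

lemma pres_eq_append:
  assumes "pres_eq Y S u v" "pres_eq Y S u' v'"
  shows "pres_eq Y S (u @ u') (v @ v')"
proof -
  have l: "u \<in> lists Y" "v \<in> lists Y" "u' \<in> lists Y" "v' \<in> lists Y"
    using assms pres_eq_lists by blast+
  have "pres_eq Y S ([] @ u @ u') ([] @ v @ u')" by (rule pres_eq_cong) (use assms l in auto)
  moreover have "pres_eq Y S (v @ u' @ []) (v @ v' @ [])" by (rule pres_eq_cong) (use assms l in auto)
  ultimately show ?thesis by (auto intro: pres_eq.pe_trans)
qed

lemma pres_eq_relI:
  "(l, r) \<in> S \<Longrightarrow> l \<in> lists Y \<Longrightarrow> r \<in> lists Y \<Longrightarrow> pres_eq Y S l r"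
  using pres_eq.pe_rel[of l r S Y "[]" "[]"] by auto

declare pres_eq.pe_trans [trans]

lemma pres_class_eq_iff:
  "u \<in> lists Y \<Longrightarrow> pres_class Y S u = pres_class Y S v \<longleftrightarrow> pres_eq Y S u v"
proof
  assume u: "u \<in> lists Y" and e: "pres_class Y S u = pres_class Y S v"
  have "u \<in> pres_class Y S u" using u by (simp add: pres_class_def pres_eq.pe_refl)
  then have "pres_eq Y S v u" using e unfolding pres_class_def by blast
  then show "pres_eq Y S u v" by (rule pres_eq.pe_sym)
next
  assume "pres_eq Y S u v"
  then show "pres_class Y S u = pres_class Y S v"
    unfolding pres_class_def by (auto intro: pres_eq.pe_trans pres_eq.pe_sym)
qed

lemma pres_mult:
  assumes "u \<in> lists Y" "v \<in> lists Y"
  shows "pres_class Y S u \<otimes>\<^bsub>pres_monoid Y S\<^esub> pres_class Y S v = pres_class Y S (u @ v)"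
proof -
  have "{x. \<exists>u'\<in>pres_class Y S u. \<exists>w\<in>pres_class Y S v. pres_eq Y S (u' @ w) x} = pres_class Y S (u @ v)"
  proof safe
    fix x u' w assume "u' \<in> pres_class Y S u" "w \<in> pres_class Y S v" "pres_eq Y S (u' @ w) x"
    then show "x \<in> pres_class Y S (u @ v)"
      by (auto simp: pres_class_def intro: pres_eq.pe_trans pres_eq_append)
  next
    fix x assume "x \<in> pres_class Y S (u @ v)"
    then show "\<exists>u'\<in>pres_class Y S u. \<exists>w\<in>pres_class Y S v. pres_eq Y S (u' @ w) x"
      using assms by (auto simp: pres_class_def intro!: bexI[of _ u] bexI[of _ v] pres_eq.pe_refl)
  qed
  then show ?thesis by (simp add: pres_monoid_def)
qed

lemma pres_carrier: "carrier (pres_monoid Y S) = pres_class Y S ` lists Y"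
  by (simp add: pres_monoid_def)

lemma pres_one: "\<one>\<^bsub>pres_monoid Y S\<^esub> = pres_class Y S []"
  by (simp add: pres_monoid_def)

lemma pres_monoid_monoid: "monoid (pres_monoid Y S)"
proof (rule monoidI)
  fix x y assume "x \<in> carrier (pres_monoid Y S)" "y \<in> carrier (pres_monoid Y S)"
  then obtain u v where "u \<in> lists Y" "v \<in> lists Y" "x = pres_class Y S u" "y = pres_class Y S v"
    by (auto simp: pres_carrier)
  then show "x \<otimes>\<^bsub>pres_monoid Y S\<^esub> y \<in> carrier (pres_monoid Y S)"
    by (simp add: pres_carrier pres_mult)
next
  show "\<one>\<^bsub>pres_monoid Y S\<^esub> \<in> carrier (pres_monoid Y S)" by (auto simp: pres_carrier pres_one)
next
  fix x y z assume "x \<in> carrier (pres_monoid Y S)" "y \<in> carrier (pres_monoid Y S)"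
    "z \<in> carrier (pres_monoid Y S)"
  then obtain u v w where "u \<in> lists Y" "v \<in> lists Y" "w \<in> lists Y"
    "x = pres_class Y S u" "y = pres_class Y S v" "z = pres_class Y S w"
    by (auto simp: pres_carrier)
  then show "x \<otimes>\<^bsub>pres_monoid Y S\<^esub> y \<otimes>\<^bsub>pres_monoid Y S\<^esub> z
           = x \<otimes>\<^bsub>pres_monoid Y S\<^esub> (y \<otimes>\<^bsub>pres_monoid Y S\<^esub> z)"
    by (simp add: pres_mult)
next
  fix x assume "x \<in> carrier (pres_monoid Y S)"
  then obtain u where "u \<in> lists Y" "x = pres_class Y S u"
    by (auto simp: pres_carrier)
  then show "\<one>\<^bsub>pres_monoid Y S\<^esub> \<otimes>\<^bsub>pres_monoid Y S\<^esub> x = x"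
    "x \<otimes>\<^bsub>pres_monoid Y S\<^esub> \<one>\<^bsub>pres_monoid Y S\<^esub> = x"
    using pres_mult[of "[]" Y u S] pres_mult[of u Y "[]" S] by (auto simp: pres_one)
qed

lemma pres_monoid_group:
  assumes "\<And>y. y \<in> Y \<Longrightarrow> \<exists>z\<in>lists Y. pres_eq Y S (z @ [y]) []"
  shows "group (pres_monoid Y S)"
proof -
  have inv: "\<exists>z\<in>lists Y. pres_eq Y S (z @ w) []" if "w \<in> lists Y" for w
    using that
  proof (induction w)
    case Nil then show ?case by (auto intro: pres_eq.pe_refl)
  next
    case (Cons y w)
    then obtain z where z: "z \<in> lists Y" "pres_eq Y S (z @ w) []" by auto
    have "y \<in> Y" using Cons by auto
    then obtain z' where z': "z' \<in> lists Y" "pres_eq Y S (z' @ [y]) []" using assms[of y] by auto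
    have "pres_eq Y S (z @ (z' @ [y]) @ w) (z @ [] @ w)"
      by (rule pres_eq_cong) (use z z' Cons in auto)
    then have "pres_eq Y S ((z @ z') @ y # w) []" using z by (auto intro: pres_eq.pe_trans)
    then show ?case using z z' by (intro bexI[of _ "z @ z'"]) auto
  qed
  show ?thesis
  proof (rule monoid.group_l_invI[OF pres_monoid_monoid])
    fix x assume "x \<in> carrier (pres_monoid Y S)"
    then obtain w where w: "w \<in> lists Y" "x = pres_class Y S w" by (auto simp: pres_carrier)
    obtain z where "z \<in> lists Y" "pres_eq Y S (z @ w) []" using inv[OF w(1)] by auto
    then show "\<exists>y\<in>carrier (pres_monoid Y S). y \<otimes>\<^bsub>pres_monoid Y S\<^esub> x = \<one>\<^bsub>pres_monoid Y S\<^esub>"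
      using w by (auto simp: pres_carrier pres_mult pres_one pres_class_eq_iff
                       intro!: bexI[of _ "pres_class Y S z"])
  qed
qed

lemma pres_monoid_isoI:
  fixes ev :: "'l list \<Rightarrow> 'g" and G :: "('g, 'n) monoid_scheme"
  assumes ev_mult: "\<And>u v. u \<in> lists Y \<Longrightarrow> v \<in> lists Y \<Longrightarrow> ev (u @ v) = ev u \<otimes>\<^bsub>G\<^esub> ev v"
    and ev_onto: "ev ` lists Y = carrier G"
    and ev_eq: "\<And>u v. u \<in> lists Y \<Longrightarrow> v \<in> lists Y \<Longrightarrow> ev u = ev v \<longleftrightarrow> pres_eq Y S u v"
  shows "G \<cong> pres_monoid Y S"
proof -
  define Psi where "Psi g = pres_class Y S (SOME w. w \<in> lists Y \<and> ev w = g)" for g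
  have Psi_ev: "Psi (ev w) = pres_class Y S w" if w: "w \<in> lists Y" for w
  proof -
    define w' where "w' = (SOME w'. w' \<in> lists Y \<and> ev w' = ev w)"
    have "w' \<in> lists Y \<and> ev w' = ev w" unfolding w'_def by (rule someI[of _ w]) (use w in simp)
    then have "pres_class Y S w' = pres_class Y S w"
      using ev_eq[of w' w] w by (simp add: pres_class_eq_iff)
    then show ?thesis by (simp add: Psi_def w'_def)
  qed
  have words: "\<exists>w\<in>lists Y. g = ev w" if "g \<in> carrier G" for g
    using that ev_onto by (metis imageE)
  have "Psi \<in> hom G (pres_monoid Y S)"
  proof (rule homI)
    fix g assume "g \<in> carrier G"
    then obtain w where "w \<in> lists Y" "g = ev w" using words by blast
    then show "Psi g \<in> carrier (pres_monoid Y S)" by (simp add: Psi_ev pres_carrier)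
  next
    fix g1 g2 assume "g1 \<in> carrier G" "g2 \<in> carrier G"
    then obtain w1 w2 where "w1 \<in> lists Y" "g1 = ev w1" "w2 \<in> lists Y" "g2 = ev w2"
      using words by blast
    then show "Psi (g1 \<otimes>\<^bsub>G\<^esub> g2) = Psi g1 \<otimes>\<^bsub>pres_monoid Y S\<^esub> Psi g2"
      by (simp add: ev_mult[symmetric] Psi_ev pres_mult)
  qed
  moreover have "inj_on Psi (carrier G)"
  proof (rule inj_onI)
    fix g1 g2 assume "g1 \<in> carrier G" "g2 \<in> carrier G" "Psi g1 = Psi g2"
    then obtain w1 w2 where "w1 \<in> lists Y" "g1 = ev w1" "w2 \<in> lists Y" "g2 = ev w2"
      "Psi g1 = Psi g2" using words by blast
    then show "g1 = g2" by (simp add: Psi_ev pres_class_eq_iff ev_eq)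
  qed
  moreover have "Psi ` carrier G = carrier (pres_monoid Y S)"
    unfolding ev_onto[symmetric] pres_carrier image_image by (rule image_cong) (simp_all add: Psi_ev)
  ultimately show ?thesis unfolding is_iso_def iso_def bij_betw_def by blast
qed

section \<open>The free abelian group B and its normal words\<close>

abbreviation "PB I \<equiv> pres_eq (B_gens I) (B_rels I)"
abbreviation "clsB I \<equiv> pres_class (B_gens I) (B_rels I)"
abbreviation "BM I \<equiv> pres_monoid (B_gens I) (B_rels I)"

lemma B_cancel: "q \<in> I \<Longrightarrow> PB I [(q, e), (q, \<not> e)] []"
  by (rule pres_eq_relI) (auto simp: B_rels_def B_gens_def)

lemma B_commute: "p \<in> I \<Longrightarrow> q \<in> I \<Longrightarrow> q < p \<Longrightarrow> PB I [(p, e), (q, d)] [(q, d), (p, e)]"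
  by (rule pres_eq_relI) (auto simp: B_rels_def B_gens_def)

lemma B_group: "group (BM I)"
proof (rule pres_monoid_group)
  fix y assume "y \<in> B_gens I"
  then obtain p e where y: "y = (p, e)" and p: "p \<in> I" by (cases y) (auto simp: B_gens_def)
  have "PB I [(p, \<not> e), (p, e)] []" using B_cancel[OF p, of "\<not> e"] by simp
  then show "\<exists>z\<in>lists (B_gens I). PB I (z @ [y]) []"
    using y p by (intro bexI[of _ "[(p, \<not> e)]"]) (auto simp: B_gens_def)
qed

text \<open>Exponent sums: the coordinates of a word in the free abelian group.  They are
  invariant under the relations of B.\<close>
fun exp_sum :: "('i \<times> bool) list \<Rightarrow> 'i \<Rightarrow> int" where
  "exp_sum [] i = 0"
| "exp_sum (x # xs) i = (if fst x = i then (if snd x then 1 else -1) else 0) + exp_sum xs i"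

lemma exp_sum_append: "exp_sum (xs @ ys) i = exp_sum xs i + exp_sum ys i"
  by (induction xs) auto

lemma exp_sum_rev: "exp_sum (rev xs) i = exp_sum xs i"
  by (induction xs) (auto simp: exp_sum_append)

lemma exp_sum_PB: "PB I u v \<Longrightarrow> exp_sum u = exp_sum v"
proof (induction rule: pres_eq.induct)
  case (pe_rel l r w1 w2)
  have "exp_sum l = exp_sum r" using pe_rel(1) unfolding B_rels_def by (auto simp: fun_eq_iff)
  then show ?case by (simp add: fun_eq_iff exp_sum_append)
qed auto

text \<open>A normal word lists its letters with weakly decreasing index, all letters of the same
  index being equal; it stands (reversed) for the element
  \<open>x_q1^e1 \<dots> x_qk^ek\<close> with \<open>q1 \<le> \<dots> \<le> qk\<close> of B.\<close>
definition normal_word :: "'i::linorder set \<Rightarrow> ('i \<times> bool) list \<Rightarrow> bool" where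
  "normal_word I w \<longleftrightarrow> set w \<subseteq> I \<times> UNIV
     \<and> sorted_wrt (\<lambda>x y. fst y \<le> fst x \<and> (fst x = fst y \<longrightarrow> x = y)) w"

lemma normal_word_Nil [simp]: "normal_word I []"
  by (simp add: normal_word_def)

lemma normal_word_Cons:
  "normal_word I (x # w) \<longleftrightarrow>
     x \<in> I \<times> UNIV \<and> normal_word I w \<and> (\<forall>y\<in>set w. fst y \<le> fst x \<and> (fst x = fst y \<longrightarrow> x = y))"
  by (auto simp: normal_word_def)

lemma exp_sum_zero: "\<forall>y\<in>set u. fst y \<noteq> i \<Longrightarrow> exp_sum u i = 0"
  by (induction u) auto

lemma exp_sum_sign:
  "\<forall>y\<in>set u. fst y = p \<longrightarrow> y = (p, e) \<Longrightarrow> (if e then exp_sum u p \<ge> 0 else exp_sum u p \<le> 0)"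
  by (induction u) (auto split: if_splits)

lemma normal_word_head:
  assumes "normal_word I ((p, e) # u)"
  shows "\<forall>i. p < i \<longrightarrow> exp_sum ((p, e) # u) i = 0"
    and "exp_sum ((p, e) # u) p \<noteq> 0"
    and "0 < exp_sum ((p, e) # u) p \<longleftrightarrow> e"
proof -
  have h: "\<forall>y\<in>set u. fst y \<le> p \<and> (p = fst y \<longrightarrow> (p, e) = y)"
    using assms by (simp add: normal_word_Cons)
  show "\<forall>i. p < i \<longrightarrow> exp_sum ((p, e) # u) i = 0"
    using h by (auto intro!: exp_sum_zero)
  have "if e then exp_sum u p \<ge> 0 else exp_sum u p \<le> 0" using h by (intro exp_sum_sign) auto
  then show "exp_sum ((p, e) # u) p \<noteq> 0" "0 < exp_sum ((p, e) # u) p \<longleftrightarrow> e"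
    by (auto split: if_splits)
qed

lemma normal_word_unique:
  "normal_word I v \<Longrightarrow> normal_word I v' \<Longrightarrow> (\<And>i. exp_sum v i = exp_sum v' i) \<Longrightarrow> v = v'"
proof (induction v arbitrary: v')
  case Nil
  show ?case
  proof (cases v')
    case (Cons x u')
    obtain p e where "x = (p, e)" by (cases x)
    then show ?thesis using normal_word_head(2)[of I p e u'] Nil Cons by (metis exp_sum.simps(1))
  qed simp
next
  case (Cons x u)
  obtain p e where x: "x = (p, e)" by (cases x)
  show ?case
  proof (cases v')
    case Nil
    then show ?thesis using normal_word_head(2)[of I p e u] Cons.prems x by (metis exp_sum.simps(1))
  next
    case (Cons x' u')
    obtain p' e' where x': "x' = (p', e')" by (cases x')
    have A1: "normal_word I ((p, e) # u)" and A2: "normal_word I ((p', e') # u')"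
      using Cons.prems x x' Cons by auto
    have eq: "\<And>i. exp_sum ((p, e) # u) i = exp_sum ((p', e') # u') i"
      using Cons.prems(3) x x' Cons by simp
    have pp: "p = p'"
    proof (rule ccontr)
      assume "p \<noteq> p'"
      then consider "p < p'" | "p' < p" by fastforce
      then show False
        using normal_word_head[OF A1] normal_word_head[OF A2] eq[of p'] eq[of p] by cases auto
    qed
    have ee: "e = e'" using normal_word_head(3)[OF A1] normal_word_head(3)[OF A2] eq[of p] pp by auto
    have "\<And>i. exp_sum u i = exp_sum u' i" using eq pp ee by simp
    moreover have "normal_word I u" "normal_word I u'" using A1 A2 by (auto simp: normal_word_Cons)
    ultimately have "u = u'" using Cons.IH by blast
    then show ?thesis using pp ee x x' \<open>v' = x' # u'\<close> by simp
  qed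
qed

lemma normal_word_PB_unique:
  assumes "normal_word I v" "normal_word I v'" "PB I (rev v) (rev v')"
  shows "v = v'"
proof (rule normal_word_unique[OF assms(1,2)])
  fix i show "exp_sum v i = exp_sum v' i"
    using exp_sum_PB[OF assms(3)] by (metis exp_sum_rev)
qed

section \<open>The normal-form action\<close>

definition x_letter :: "'i \<times> bool \<Rightarrow> ('a, 'i) gletter" where
  "x_letter x = LX (fst x) (snd x)"

lemma x_letter_simp [simp]: "x_letter (p, e) = LX p e"
  by (simp add: x_letter_def)

text \<open>Right multiplication of a normal word (stored reversed) by a letter \<open>x_r^g\<close>: the letter
  moves past all larger indices, each commutation producing a factor-set value, and cancels
  against an inverse letter of the same index.  The result is a normal word together with the
  element of A collected on the right.\<close>
fun nf_mult :: "('a, 'm) monoid_scheme \<Rightarrow> ('i::linorder \<Rightarrow> bool \<Rightarrow> 'i \<Rightarrow> bool \<Rightarrow> 'a)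
    \<Rightarrow> ('i \<Rightarrow> bool \<Rightarrow> 'a \<Rightarrow> 'a) \<Rightarrow> ('i \<times> bool) list \<Rightarrow> 'i \<Rightarrow> bool \<Rightarrow> ('i \<times> bool) list \<times> 'a" where
  "nf_mult A f psi [] r g = ([(r, g)], \<one>\<^bsub>A\<^esub>)"
| "nf_mult A f psi ((p, e) # w) r g =
    (if r < p then ((p, e) # fst (nf_mult A f psi w r g),
                    psi p e (snd (nf_mult A f psi w r g)) \<otimes>\<^bsub>A\<^esub> f p e r g)
     else if p = r \<and> e = (\<not> g) then (w, \<one>\<^bsub>A\<^esub>)
     else ((r, g) # (p, e) # w, \<one>\<^bsub>A\<^esub>))"

definition nf_word :: "('a, 'm) monoid_scheme \<Rightarrow> ('i \<times> bool) list \<Rightarrow> 'a \<Rightarrow> ('a, 'i) gletter list" where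
  "nf_word A v a = map x_letter (rev v) @ aword A a"

fun act_letter :: "('a, 'm) monoid_scheme \<Rightarrow> ('i::linorder \<Rightarrow> bool \<Rightarrow> 'i \<Rightarrow> bool \<Rightarrow> 'a)
    \<Rightarrow> ('i \<Rightarrow> bool \<Rightarrow> 'a \<Rightarrow> 'a) \<Rightarrow> ('a, 'i) gletter \<Rightarrow> ('i \<times> bool) list \<times> 'a
    \<Rightarrow> ('i \<times> bool) list \<times> 'a" where
  "act_letter A f psi (LA b) (v, a) = (v, a \<otimes>\<^bsub>A\<^esub> b)"
| "act_letter A f psi (LX r g) (v, a) =
     (fst (nf_mult A f psi v r g), snd (nf_mult A f psi v r g) \<otimes>\<^bsub>A\<^esub> psi r g a)"

definition act_word :: "('a, 'm) monoid_scheme \<Rightarrow> ('i::linorder \<Rightarrow> bool \<Rightarrow> 'i \<Rightarrow> bool \<Rightarrow> 'a)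
    \<Rightarrow> ('i \<Rightarrow> bool \<Rightarrow> 'a \<Rightarrow> 'a) \<Rightarrow> ('a, 'i) gletter list \<Rightarrow> ('i \<times> bool) list \<times> 'a
    \<Rightarrow> ('i \<times> bool) list \<times> 'a" where
  "act_word A f psi w s = fold (act_letter A f psi) w s"

lemma act_word_Nil [simp]: "act_word A f psi [] s = s"
  by (simp add: act_word_def)

lemma act_word_Cons [simp]: "act_word A f psi (l # w) s = act_word A f psi w (act_letter A f psi l s)"
  by (simp add: act_word_def)

lemma act_word_append: "act_word A f psi (u @ w) s = act_word A f psi w (act_word A f psi u s)"
  by (simp add: act_word_def)

lemma nf_mult_top:
  assumes "\<forall>x\<in>set v. fst x < p \<or> x = (p, e)"
  shows "nf_mult A f psi v p e = ((p, e) # v, \<one>\<^bsub>A\<^esub>)"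
  using assms by (cases v) auto

lemma nf_mult_set: "set (fst (nf_mult A f psi w r g)) \<subseteq> insert (r, g) (set w)"
  by (induction w) (auto split: if_splits)

locale factor_data = A: group A
  for A :: "('a, 'm) monoid_scheme" +
  fixes I :: "'i::linorder set"
    and f :: "'i \<Rightarrow> bool \<Rightarrow> 'i \<Rightarrow> bool \<Rightarrow> 'a" and psi :: "'i \<Rightarrow> bool \<Rightarrow> 'a \<Rightarrow> 'a"
  assumes f_car: "\<And>p q e d. p \<in> I \<Longrightarrow> q \<in> I \<Longrightarrow> p > q \<Longrightarrow> f p e q d \<in> carrier A"
    and psi_iso: "\<And>p e. p \<in> I \<Longrightarrow> psi p e \<in> iso A A"
begin

abbreviation "Y \<equiv> G_gens A I"
abbreviation "S \<equiv> G_rels A I f psi"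
abbreviation "PE \<equiv> pres_eq Y S"

lemma psi_car: "p \<in> I \<Longrightarrow> a \<in> carrier A \<Longrightarrow> psi p e a \<in> carrier A"
  by (meson hom_in_carrier iso_imp_homomorphism psi_iso)

lemma psi_mult:
  "p \<in> I \<Longrightarrow> a \<in> carrier A \<Longrightarrow> b \<in> carrier A \<Longrightarrow> psi p e (a \<otimes>\<^bsub>A\<^esub> b) = psi p e a \<otimes>\<^bsub>A\<^esub> psi p e b"
  by (meson hom_mult iso_imp_homomorphism psi_iso)

lemma psi_one: "p \<in> I \<Longrightarrow> psi p e \<one>\<^bsub>A\<^esub> = \<one>\<^bsub>A\<^esub>"
  by (meson A.group_axioms hom_one iso_imp_homomorphism psi_iso)

lemma nf_mult_car: "set w \<subseteq> I \<times> UNIV \<Longrightarrow> r \<in> I \<Longrightarrow> snd (nf_mult A f psi w r g) \<in> carrier A"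
proof (induction w)
  case (Cons x w)
  obtain p e where x: "x = (p, e)" by (cases x)
  then have "p \<in> I" "set w \<subseteq> I \<times> UNIV" using Cons.prems by auto
  then show ?case using Cons x by (simp add: f_car psi_car)
qed simp

lemma nf_mult_normal: "normal_word I w \<Longrightarrow> r \<in> I \<Longrightarrow> normal_word I (fst (nf_mult A f psi w r g))"
proof (induction w)
  case Nil then show ?case by (simp add: normal_word_Cons)
next
  case (Cons x w)
  obtain p e where x: "x = (p, e)" by (cases x)
  show ?case
  proof (cases "r < p")
    case True
    have "normal_word I (fst (nf_mult A f psi w r g))" using Cons by (simp add: normal_word_Cons)
    moreover have "set (fst (nf_mult A f psi w r g)) \<subseteq> insert (r, g) (set w)" by (rule nf_mult_set)
    ultimately show ?thesis using Cons.prems True x by (auto simp: normal_word_Cons)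
  next
    case False
    show ?thesis
    proof (cases "p = r \<and> e = (\<not> g)")
      case True then show ?thesis using Cons.prems x \<open>\<not> r < p\<close> by (simp add: normal_word_Cons)
    next
      case c: False
      have pe: "p \<le> r" "p = r \<longrightarrow> e = g" using False c by auto
      have w: "\<forall>y\<in>set w. fst y \<le> p \<and> (p = fst y \<longrightarrow> (p, e) = y)" "normal_word I w" "p \<in> I"
        using Cons.prems x by (auto simp: normal_word_Cons)
      have "\<forall>y\<in>set ((p, e) # w). fst y \<le> r \<and> (r = fst y \<longrightarrow> (r, g) = y)"
        using w pe by force
      then show ?thesis using Cons.prems x False c w by (simp add: normal_word_Cons)
    qed
  qed
qed

lemma aword_lists: "a \<in> carrier A \<Longrightarrow> aword A a \<in> lists Y"
  by (auto simp: aword_def G_gens_def)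

lemma LX_Y: "p \<in> I \<Longrightarrow> LX p e \<in> Y"
  by (auto simp: G_gens_def)

lemma LA_Y: "a \<in> carrier A \<Longrightarrow> a \<noteq> \<one>\<^bsub>A\<^esub> \<Longrightarrow> LA a \<in> Y"
  by (auto simp: G_gens_def)

lemma x_letters_lists: "set v \<subseteq> I \<times> UNIV \<Longrightarrow> map x_letter v \<in> lists Y"
  by (auto simp: x_letter_def G_gens_def in_lists_conv_set)

lemma nf_word_lists: "set v \<subseteq> I \<times> UNIV \<Longrightarrow> a \<in> carrier A \<Longrightarrow> nf_word A v a \<in> lists Y"
  unfolding nf_word_def using x_letters_lists[of "rev v"] aword_lists[of a] by simp

text \<open>The four kinds of relations of S, stated for arbitrary elements of A
  (the element 1 being the empty word).\<close>
lemma aword_mult: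
  assumes a: "a \<in> carrier A" and b: "b \<in> carrier A"
  shows "PE (aword A a @ aword A b) (aword A (a \<otimes>\<^bsub>A\<^esub> b))"
proof -
  consider "a = \<one>\<^bsub>A\<^esub>" | "b = \<one>\<^bsub>A\<^esub>" | "a \<noteq> \<one>\<^bsub>A\<^esub>" "b \<noteq> \<one>\<^bsub>A\<^esub>" by blast
  then show ?thesis
  proof cases
    case 1 then show ?thesis
      using a b aword_lists[of b] by (simp add: aword_def[of A "\<one>\<^bsub>A\<^esub>"] pres_eq.pe_refl)
  next
    case 2 then show ?thesis
      using a b aword_lists[of a] by (simp add: aword_def[of A "\<one>\<^bsub>A\<^esub>"] pres_eq.pe_refl)
  next
    case 3
    have r: "([LA a, LA b], aword A (a \<otimes>\<^bsub>A\<^esub> b)) \<in> S"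
      unfolding G_rels_def using 3 a b by blast
    have l: "[LA a, LA b] \<in> lists Y" using 3 a b LA_Y by simp
    show ?thesis using 3 pres_eq_relI[OF r l aword_lists[of "a \<otimes>\<^bsub>A\<^esub> b"]] a b
      by (simp add: aword_def[of A a] aword_def[of A b])
  qed
qed

lemma aword_LX:
  assumes a: "a \<in> carrier A" and p: "p \<in> I"
  shows "PE (aword A a @ [LX p e]) (LX p e # aword A (psi p e a))"
proof (cases "a = \<one>\<^bsub>A\<^esub>")
  case True then show ?thesis using p LX_Y[OF p]
    by (simp add: aword_def[of A "\<one>\<^bsub>A\<^esub>"] psi_one pres_eq.pe_refl)
next
  case False
  have r: "([LA a, LX p e], LX p e # aword A (psi p e a)) \<in> S"
    unfolding G_rels_def using False a p by blast
  have l1: "[LA a, LX p e] \<in> lists Y" using False a LA_Y LX_Y[OF p] by simp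
  have l2: "LX p e # aword A (psi p e a) \<in> lists Y"
    using aword_lists[OF psi_car[OF p a]] LX_Y[OF p] by simp
  show ?thesis using False pres_eq_relI[OF r l1 l2] by (simp add: aword_def[of A a])
qed

lemma LX_commute:
  assumes "p \<in> I" "q \<in> I" "q < p"
  shows "PE [LX p e, LX q d] ([LX q d, LX p e] @ aword A (f p e q d))"
proof (rule pres_eq_relI)
  show "([LX p e, LX q d], [LX q d, LX p e] @ aword A (f p e q d)) \<in> S"
    unfolding G_rels_def using assms by blast
qed (use assms LX_Y aword_lists[OF f_car[OF assms]] in auto)

lemma LX_cancel: "q \<in> I \<Longrightarrow> PE [LX q e, LX q (\<not> e)] []"
  by (rule pres_eq_relI) (auto simp: G_rels_def LX_Y)

lemma nf_mult_eq_step: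
  assumes I: "p \<in> I" "r \<in> I" "r < p" and w: "set w \<subseteq> I \<times> UNIV" and w1: "set w1 \<subseteq> I \<times> UNIV"
    and z: "z \<in> carrier A"
    and IH: "PE (map x_letter (rev w) @ [LX r g]) (map x_letter (rev w1) @ aword A z)"
  shows "PE (map x_letter (rev w) @ [LX p e, LX r g])
            (map x_letter (rev w1) @ [LX p e] @ aword A (psi p e z \<otimes>\<^bsub>A\<^esub> f p e r g))"
proof -
  have lw: "map x_letter (rev w) \<in> lists Y" and lw1: "map x_letter (rev w1) \<in> lists Y"
    using x_letters_lists[of "rev w"] x_letters_lists[of "rev w1"] w w1 by simp_all
  have fz: "f p e r g \<in> carrier A" using f_car[OF I] .
  have tail: "[LX p e] @ aword A (f p e r g) \<in> lists Y" using LX_Y[OF I(1)] aword_lists[OF fz] by simp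
  have "PE (map x_letter (rev w) @ [LX p e, LX r g])
           (map x_letter (rev w) @ [LX r g, LX p e] @ aword A (f p e r g))"
    using pres_eq_cong[OF LX_commute[OF I] lw, of "[]"] by simp
  also have "PE \<dots> (map x_letter (rev w1) @ aword A z @ [LX p e] @ aword A (f p e r g))"
    using pres_eq_append[OF IH pres_eq.pe_refl[OF tail]] by simp
  also have "PE \<dots> (map x_letter (rev w1) @ LX p e # aword A (psi p e z) @ aword A (f p e r g))"
    using pres_eq_cong[OF aword_LX[OF z I(1)] lw1 aword_lists[OF fz]] by simp
  also have "PE \<dots> (map x_letter (rev w1) @ [LX p e] @ aword A (psi p e z \<otimes>\<^bsub>A\<^esub> f p e r g))"
    using pres_eq_cong[OF aword_mult[OF psi_car[OF I(1) z] fz], of "map x_letter (rev w1) @ [LX p e]" "[]"]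
      lw1 LX_Y[OF I(1)] by simp
  finally show ?thesis .
qed

lemma nf_mult_eq:
  assumes "set v \<subseteq> I \<times> UNIV" "r \<in> I"
  shows "PE (map x_letter (rev v) @ [LX r g])
            (map x_letter (rev (fst (nf_mult A f psi v r g))) @ aword A (snd (nf_mult A f psi v r g)))"
  using assms(1)
proof (induction v)
  case Nil then show ?case using LX_Y[OF assms(2)] by (simp add: aword_def pres_eq.pe_refl)
next
  case (Cons x w)
  obtain p e where x: "x = (p, e)" by (cases x)
  have p: "p \<in> I" and wI: "set w \<subseteq> I \<times> UNIV" using Cons.prems x by auto
  have lw: "map x_letter (rev w) \<in> lists Y" using x_letters_lists[of "rev w"] wI by simp
  show ?case
  proof (cases "r < p")
    case True
    have "set (fst (nf_mult A f psi w r g)) \<subseteq> I \<times> UNIV"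
      using nf_mult_set[of A f psi w r g] wI assms(2) by auto
    then show ?thesis
      using nf_mult_eq_step[OF p assms(2) True wI _ nf_mult_car[OF wI assms(2)] Cons.IH[OF wI]] True x
      by simp
  next
    case False
    show ?thesis
    proof (cases "p = r \<and> e = (\<not> g)")
      case True
      have "PE (map x_letter (rev w) @ [LX r (\<not> g), LX r (\<not> \<not> g)] @ []) (map x_letter (rev w) @ [] @ [])"
        by (rule pres_eq_cong[OF LX_cancel[OF assms(2)] lw]) simp
      then show ?thesis using True False x by (simp add: aword_def)
    next
      case c: False
      have "map x_letter (rev w) @ [LX p e, LX r g] \<in> lists Y" using lw LX_Y p assms(2) by simp
      then show ?thesis using c False x by (auto simp: aword_def pres_eq.pe_refl)
    qed
  qed
qed

definition normal_pair :: "('i \<times> bool) list \<times> 'a \<Rightarrow> bool" where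
  "normal_pair s \<longleftrightarrow> normal_word I (fst s) \<and> snd s \<in> carrier A"

lemma normal_pair_init: "normal_pair ([], \<one>\<^bsub>A\<^esub>)"
  by (simp add: normal_pair_def)

lemma act_letter_normal: "normal_pair s \<Longrightarrow> l \<in> Y \<Longrightarrow> normal_pair (act_letter A f psi l s)"
proof -
  assume s: "normal_pair s" and l: "l \<in> Y"
  obtain v a where sv: "s = (v, a)" by (cases s)
  have vI: "set v \<subseteq> I \<times> UNIV" using s sv by (simp add: normal_pair_def normal_word_def)
  show ?thesis
  proof (cases l)
    case (LA b)
    then have "b \<in> carrier A" using l by (auto simp: G_gens_def)
    then show ?thesis using s sv LA by (simp add: normal_pair_def)
  next
    case (LX r g)
    then have r: "r \<in> I" using l by (auto simp: G_gens_def)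
    then show ?thesis using s sv LX nf_mult_normal[of v r g] nf_mult_car[OF vI r] psi_car
      by (simp add: normal_pair_def)
  qed
qed

lemma act_word_normal: "w \<in> lists Y \<Longrightarrow> normal_pair s \<Longrightarrow> normal_pair (act_word A f psi w s)"
  by (induction w arbitrary: s) (auto simp: act_letter_normal)

lemma act_word_aword:
  "a \<in> carrier A \<Longrightarrow> b \<in> carrier A \<Longrightarrow> act_word A f psi (aword A b) (v, a) = (v, a \<otimes>\<^bsub>A\<^esub> b)"
  by (simp add: aword_def)

lemma act_letter_eq:
  assumes s: "normal_pair (v, a)" and l: "l \<in> Y"
  shows "PE (nf_word A v a @ [l])
            (nf_word A (fst (act_letter A f psi l (v, a))) (snd (act_letter A f psi l (v, a))))"
proof -
  have vI: "set v \<subseteq> I \<times> UNIV" and a: "a \<in> carrier A"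
    using s by (auto simp: normal_pair_def normal_word_def)
  have lv: "map x_letter (rev v) \<in> lists Y" using x_letters_lists[of "rev v"] vI by simp
  show ?thesis
  proof (cases l)
    case (LA b)
    then have b: "b \<in> carrier A" "b \<noteq> \<one>\<^bsub>A\<^esub>" using l by (auto simp: G_gens_def)
    have "PE (map x_letter (rev v) @ (aword A a @ aword A b) @ [])
             (map x_letter (rev v) @ aword A (a \<otimes>\<^bsub>A\<^esub> b) @ [])"
      by (rule pres_eq_cong[OF aword_mult[OF a b(1)] lv]) simp
    then show ?thesis using LA b by (simp add: nf_word_def aword_def[of A b])
  next
    case (LX r g)
    then have r: "r \<in> I" using l by (auto simp: G_gens_def)
    define v' where "v' = fst (nf_mult A f psi v r g)"
    define z where "z = snd (nf_mult A f psi v r g)"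
    have z: "z \<in> carrier A" unfolding z_def using nf_mult_car[OF vI r] .
    have pa: "psi r g a \<in> carrier A" using psi_car[OF r a] .
    have "set v' \<subseteq> I \<times> UNIV" unfolding v'_def using nf_mult_set[of A f psi v r g] vI r by auto
    then have lv': "map x_letter (rev v') \<in> lists Y" using x_letters_lists[of "rev v'"] by simp
    have "PE (map x_letter (rev v) @ aword A a @ [LX r g])
             (map x_letter (rev v) @ [LX r g] @ aword A (psi r g a))"
      using pres_eq_cong[OF aword_LX[OF a r] lv, of "[]"] by simp
    also have "PE \<dots> (map x_letter (rev v') @ aword A z @ aword A (psi r g a))"
      using pres_eq_append[OF nf_mult_eq[OF vI r] pres_eq.pe_refl[OF aword_lists[OF pa]]]
      by (simp add: v'_def z_def)
    also have "PE \<dots> (map x_letter (rev v') @ aword A (z \<otimes>\<^bsub>A\<^esub> psi r g a))"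
      using pres_eq_cong[OF aword_mult[OF z pa] lv', of "[]"] by simp
    finally show ?thesis using LX by (simp add: nf_word_def v'_def z_def)
  qed
qed

lemma act_word_eq:
  "w \<in> lists Y \<Longrightarrow> normal_pair s \<Longrightarrow>
     PE (nf_word A (fst s) (snd s) @ w) (nf_word A (fst (act_word A f psi w s)) (snd (act_word A f psi w s)))"
proof (induction w arbitrary: s)
  case Nil
  then show ?case using nf_word_lists[of "fst s" "snd s"]
    by (simp add: normal_pair_def normal_word_def pres_eq.pe_refl)
next
  case (Cons l w)
  obtain v a where sv: "s = (v, a)" by (cases s)
  have l: "l \<in> Y" and w: "w \<in> lists Y" using Cons.prems by auto
  let ?s' = "act_letter A f psi l (v, a)"
  have "normal_pair ?s'" using act_letter_normal Cons.prems sv l by simp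
  have "PE (nf_word A v a @ l # w) (nf_word A (fst ?s') (snd ?s') @ w)"
    using pres_eq_append[OF act_letter_eq[OF Cons.prems(2)[unfolded sv] l] pres_eq.pe_refl[OF w]] by simp
  also have "PE \<dots> (nf_word A (fst (act_word A f psi w ?s')) (snd (act_word A f psi w ?s')))"
    using Cons.IH[OF w \<open>normal_pair ?s'\<close>] by simp
  finally show ?case using sv by simp
qed

lemma normal_form:
  assumes "w \<in> lists Y"
  defines "s \<equiv> act_word A f psi w ([], \<one>\<^bsub>A\<^esub>)"
  shows "PE w (nf_word A (fst s) (snd s))" and "normal_pair s"
  using act_word_eq[OF assms(1) normal_pair_init] act_word_normal[OF assms(1) normal_pair_init]
  by (simp_all add: s_def nf_word_def aword_def)

end

section \<open>Conditions 1-5 make the action respect the relations\<close>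

locale factor_system = factor_data +
  assumes c1: "\<And>p q r e d g. p \<in> I \<Longrightarrow> q \<in> I \<Longrightarrow> r \<in> I \<Longrightarrow> p > q \<Longrightarrow> q > r \<Longrightarrow>
          f p e q d \<otimes>\<^bsub>A\<^esub> psi q d (f p e r g) \<otimes>\<^bsub>A\<^esub> f q d r g
          = psi p e (f q d r g) \<otimes>\<^bsub>A\<^esub> f p e r g \<otimes>\<^bsub>A\<^esub> psi r g (f p e q d)"
    and c2: "\<And>p q e d. p \<in> I \<Longrightarrow> q \<in> I \<Longrightarrow> p > q \<Longrightarrow>
          f p e q (\<not> d) \<otimes>\<^bsub>A\<^esub> psi q (\<not> d) (f p e q d) = \<one>\<^bsub>A\<^esub>"
    and c3: "\<And>p q e d. p \<in> I \<Longrightarrow> q \<in> I \<Longrightarrow> p > q \<Longrightarrow>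
          psi p (\<not> e) (f p e q d) \<otimes>\<^bsub>A\<^esub> f p (\<not> e) q d = \<one>\<^bsub>A\<^esub>"
    and c4: "\<And>p q e d a. p \<in> I \<Longrightarrow> q \<in> I \<Longrightarrow> a \<in> carrier A \<Longrightarrow> p > q \<Longrightarrow>
          psi p e (psi q d a) \<otimes>\<^bsub>A\<^esub> f p e q d = f p e q d \<otimes>\<^bsub>A\<^esub> psi q d (psi p e a)"
    and c5: "\<And>r e a. r \<in> I \<Longrightarrow> a \<in> carrier A \<Longrightarrow> psi r (\<not> e) (psi r e a) = a"
begin

lemma c4_left:
  assumes "p \<in> I" "q \<in> I" "a \<in> carrier A" "p > q" "y \<in> carrier A"
  shows "f p e q d \<otimes>\<^bsub>A\<^esub> (psi q d (psi p e a) \<otimes>\<^bsub>A\<^esub> y) = psi p e (psi q d a) \<otimes>\<^bsub>A\<^esub> (f p e q d \<otimes>\<^bsub>A\<^esub> y)"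
  using c4[OF assms(1-4), of e d] assms f_car psi_car by (simp add: A.m_assoc[symmetric])

text \<open>The inductive step of the commutation lemma below, where the head letter \<open>x_r^g\<close> of the
  normal word has larger index than both letters being commuted: the cocycle identity
  (condition 1) together with condition 4 carries the equation through the twist by \<open>psi r g\<close>.\<close>
lemma commute_step:
  assumes I: "r \<in> I" "p \<in> I" "q \<in> I" and ord: "q < p" "p < r"
    and car: "z1 \<in> carrier A" "z2 \<in> carrier A" "y1 \<in> carrier A" "y2 \<in> carrier A"
    and eq: "z2 \<otimes>\<^bsub>A\<^esub> psi q d z1 = y2 \<otimes>\<^bsub>A\<^esub> psi p e y1 \<otimes>\<^bsub>A\<^esub> f p e q d"
  shows "(psi r g z2 \<otimes>\<^bsub>A\<^esub> f r g q d) \<otimes>\<^bsub>A\<^esub> psi q d (psi r g z1 \<otimes>\<^bsub>A\<^esub> f r g p e)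
       = (psi r g y2 \<otimes>\<^bsub>A\<^esub> f r g p e) \<otimes>\<^bsub>A\<^esub> psi p e (psi r g y1 \<otimes>\<^bsub>A\<^esub> f r g q d) \<otimes>\<^bsub>A\<^esub> f p e q d"
proof -
  have qr: "q < r" using ord by simp
  have fcar: "f r g p e \<in> carrier A" "f r g q d \<in> carrier A" "f p e q d \<in> carrier A"
    using f_car I ord qr by auto
  have pc: "\<And>s t a. s \<in> I \<Longrightarrow> a \<in> carrier A \<Longrightarrow> psi s t a \<in> carrier A" using psi_car by blast
  have "(psi r g z2 \<otimes>\<^bsub>A\<^esub> f r g q d) \<otimes>\<^bsub>A\<^esub> psi q d (psi r g z1 \<otimes>\<^bsub>A\<^esub> f r g p e)
      = psi r g z2 \<otimes>\<^bsub>A\<^esub> (f r g q d \<otimes>\<^bsub>A\<^esub> (psi q d (psi r g z1) \<otimes>\<^bsub>A\<^esub> psi q d (f r g p e)))"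
    using car fcar I by (simp add: psi_mult pc A.m_assoc)
  also have "\<dots> = psi r g z2 \<otimes>\<^bsub>A\<^esub> (psi r g (psi q d z1) \<otimes>\<^bsub>A\<^esub> (f r g q d \<otimes>\<^bsub>A\<^esub> psi q d (f r g p e)))"
    using c4_left[of r q z1 "psi q d (f r g p e)" g d] car fcar I qr pc by simp
  also have "\<dots> = psi r g (z2 \<otimes>\<^bsub>A\<^esub> psi q d z1) \<otimes>\<^bsub>A\<^esub> (f r g q d \<otimes>\<^bsub>A\<^esub> psi q d (f r g p e))"
    using car fcar I pc by (simp add: psi_mult A.m_assoc)
  also have "\<dots> = psi r g (y2 \<otimes>\<^bsub>A\<^esub> psi p e y1 \<otimes>\<^bsub>A\<^esub> f p e q d) \<otimes>\<^bsub>A\<^esub> (f r g q d \<otimes>\<^bsub>A\<^esub> psi q d (f r g p e))"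
    using eq by simp
  also have "\<dots> = psi r g y2 \<otimes>\<^bsub>A\<^esub> (psi r g (psi p e y1) \<otimes>\<^bsub>A\<^esub>
                   (psi r g (f p e q d) \<otimes>\<^bsub>A\<^esub> f r g q d \<otimes>\<^bsub>A\<^esub> psi q d (f r g p e)))"
    using car fcar I pc by (simp add: psi_mult A.m_assoc)
  also have "\<dots> = psi r g y2 \<otimes>\<^bsub>A\<^esub> (psi r g (psi p e y1) \<otimes>\<^bsub>A\<^esub>
                   (f r g p e \<otimes>\<^bsub>A\<^esub> psi p e (f r g q d) \<otimes>\<^bsub>A\<^esub> f p e q d))"
    using c1[of r p q g e d] I ord by simp
  also have "\<dots> = psi r g y2 \<otimes>\<^bsub>A\<^esub> (f r g p e \<otimes>\<^bsub>A\<^esub>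
                   (psi p e (psi r g y1) \<otimes>\<^bsub>A\<^esub> (psi p e (f r g q d) \<otimes>\<^bsub>A\<^esub> f p e q d)))"
    using c4_left[of r p y1 "psi p e (f r g q d) \<otimes>\<^bsub>A\<^esub> f p e q d" g e] car fcar I ord pc
    by (simp add: A.m_assoc)
  also have "\<dots> = (psi r g y2 \<otimes>\<^bsub>A\<^esub> f r g p e) \<otimes>\<^bsub>A\<^esub> psi p e (psi r g y1 \<otimes>\<^bsub>A\<^esub> f r g q d) \<otimes>\<^bsub>A\<^esub> f p e q d"
    using car fcar I pc by (simp add: psi_mult A.m_assoc)
  finally show ?thesis .
qed

text \<open>Conditions 3 and 5 together: twisting by \<open>x_p^-e\<close> and back, with the two factor-set
  values picked up on the way, is the identity.\<close>
lemma twist_back: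
  assumes I: "p \<in> I" "q \<in> I" "q < p" and z: "z \<in> carrier A"
  shows "psi p e (psi p (\<not> e) z \<otimes>\<^bsub>A\<^esub> f p (\<not> e) q d) \<otimes>\<^bsub>A\<^esub> f p e q d = z"
proof -
  have fcar: "f p (\<not> e) q d \<in> carrier A" "f p e q d \<in> carrier A" using f_car I by auto
  have "psi p e (psi p (\<not> e) z \<otimes>\<^bsub>A\<^esub> f p (\<not> e) q d) \<otimes>\<^bsub>A\<^esub> f p e q d
      = psi p e (psi p (\<not> e) z) \<otimes>\<^bsub>A\<^esub> (psi p (\<not> \<not> e) (f p (\<not> e) q d) \<otimes>\<^bsub>A\<^esub> f p (\<not> \<not> e) q d)"
    using z fcar I psi_car by (simp add: psi_mult A.m_assoc)
  also have "\<dots> = z"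
    using c3[of p q "\<not> e" d] c5[of p z "\<not> e"] I z by simp
  finally show ?thesis .
qed

text \<open>The base situation of the commutation lemma below: no letter of w has index above p,
  so \<open>x_p^e\<close> is simply appended and only \<open>x_q^d\<close> moves past it.\<close>
lemma nf_mult_commute_top:
  assumes all: "\<forall>y\<in>set w. fst y < p \<or> y = (p, e)" and wI: "set w \<subseteq> I \<times> UNIV"
    and I: "p \<in> I" "q \<in> I" "q < p"
  shows "fst (nf_mult A f psi (fst (nf_mult A f psi w p e)) q d)
           = fst (nf_mult A f psi (fst (nf_mult A f psi w q d)) p e)
    \<and> snd (nf_mult A f psi (fst (nf_mult A f psi w p e)) q d) \<otimes>\<^bsub>A\<^esub> psi q d (snd (nf_mult A f psi w p e))
      = snd (nf_mult A f psi (fst (nf_mult A f psi w q d)) p e) \<otimes>\<^bsub>A\<^esub> psi p e (snd (nf_mult A f psi w q d))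
          \<otimes>\<^bsub>A\<^esub> f p e q d"
proof -
  have m1: "nf_mult A f psi w p e = ((p, e) # w, \<one>\<^bsub>A\<^esub>)" by (rule nf_mult_top[OF all])
  define v1 where "v1 = fst (nf_mult A f psi w q d)"
  define y1 where "y1 = snd (nf_mult A f psi w q d)"
  have m0: "nf_mult A f psi w q d = (v1, y1)" unfolding v1_def y1_def by simp
  have "set v1 \<subseteq> insert (q, d) (set w)" unfolding v1_def by (rule nf_mult_set)
  then have "\<forall>y\<in>set v1. fst y < p \<or> y = (p, e)" using all I by auto
  then have m2: "nf_mult A f psi v1 p e = ((p, e) # v1, \<one>\<^bsub>A\<^esub>)" by (rule nf_mult_top)
  have m3: "nf_mult A f psi ((p, e) # w) q d = ((p, e) # v1, psi p e y1 \<otimes>\<^bsub>A\<^esub> f p e q d)"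
    using I(3) m0 by simp
  have "y1 \<in> carrier A" unfolding y1_def using nf_mult_car wI I by simp
  then have "psi p e y1 \<in> carrier A" using psi_car I by simp
  then have "(psi p e y1 \<otimes>\<^bsub>A\<^esub> f p e q d) \<otimes>\<^bsub>A\<^esub> psi q d \<one>\<^bsub>A\<^esub>
           = \<one>\<^bsub>A\<^esub> \<otimes>\<^bsub>A\<^esub> psi p e y1 \<otimes>\<^bsub>A\<^esub> f p e q d"
    using f_car psi_one I by simp
  then show ?thesis unfolding m1 fst_conv snd_conv m3 m0 m2 by simp
qed

lemma nf_mult_commute:
  assumes "normal_word I w" "p \<in> I" "q \<in> I" "q < p"
  shows "fst (nf_mult A f psi (fst (nf_mult A f psi w p e)) q d)
           = fst (nf_mult A f psi (fst (nf_mult A f psi w q d)) p e)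
    \<and> snd (nf_mult A f psi (fst (nf_mult A f psi w p e)) q d) \<otimes>\<^bsub>A\<^esub> psi q d (snd (nf_mult A f psi w p e))
      = snd (nf_mult A f psi (fst (nf_mult A f psi w q d)) p e) \<otimes>\<^bsub>A\<^esub> psi p e (snd (nf_mult A f psi w q d))
          \<otimes>\<^bsub>A\<^esub> f p e q d"
  using assms(1)
proof (induction w)
  case Nil
  have fpq: "f p e q d \<in> carrier A" using f_car assms by auto
  have "\<not> p < q" "q \<noteq> p" using assms(4) by auto
  then show ?case using assms fpq psi_one[of p e] psi_one[of q d] by simp
next
  case (Cons x u)
  obtain r g where x: "x = (r, g)" by (cases x)
  have r: "r \<in> I" and uI: "normal_word I u" and uI': "set u \<subseteq> I \<times> UNIV"
    using Cons.prems x by (auto simp: normal_word_Cons normal_word_def)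
  have fpq: "f p e q d \<in> carrier A" using f_car assms by auto
  consider "p < r" | "r < p \<or> (r = p \<and> g = e)" | "r = p" "g = (\<not> e)" by fastforce
  then show ?case
  proof cases
    case 1
    define u1 where "u1 = fst (nf_mult A f psi u p e)"
    define z1 where "z1 = snd (nf_mult A f psi u p e)"
    define z2 where "z2 = snd (nf_mult A f psi u1 q d)"
    define v1 where "v1 = fst (nf_mult A f psi u q d)"
    define y1 where "y1 = snd (nf_mult A f psi u q d)"
    define y2 where "y2 = snd (nf_mult A f psi v1 p e)"
    have IH: "fst (nf_mult A f psi u1 q d) = fst (nf_mult A f psi v1 p e)"
      "z2 \<otimes>\<^bsub>A\<^esub> psi q d z1 = y2 \<otimes>\<^bsub>A\<^esub> psi p e y1 \<otimes>\<^bsub>A\<^esub> f p e q d"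
      using Cons.IH[OF uI] unfolding u1_def z1_def z2_def v1_def y1_def y2_def by auto
    have "set u1 \<subseteq> I \<times> UNIV" "set v1 \<subseteq> I \<times> UNIV"
      unfolding u1_def v1_def using nf_mult_set[of A f psi u] uI' assms by auto
    then have car: "z1 \<in> carrier A" "z2 \<in> carrier A" "y1 \<in> carrier A" "y2 \<in> carrier A"
      unfolding z1_def z2_def y1_def y2_def using nf_mult_car uI' assms by auto
    have "q < r" using 1 assms by simp
    then show ?thesis
      using 1 x IH commute_step[OF r assms(2,3,4) 1 car IH(2), of g]
      unfolding u1_def z1_def z2_def v1_def y1_def y2_def by simp
  next
    case 2
    have "\<forall>y\<in>set (x # u). fst y < p \<or> y = (p, e)"
      using Cons.prems[unfolded x] 2 by (auto simp: normal_word_Cons x)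
    moreover have "set (x # u) \<subseteq> I \<times> UNIV" using Cons.prems by (simp add: normal_word_def)
    ultimately show ?thesis by (rule nf_mult_commute_top[OF _ _ assms(2-4)])
  next
    case 3
    define z1 where "z1 = snd (nf_mult A f psi u q d)"
    have z1: "z1 \<in> carrier A" unfolding z1_def using nf_mult_car uI' assms by auto
    have "psi p e (psi p (\<not> e) z1 \<otimes>\<^bsub>A\<^esub> f p (\<not> e) q d) \<in> carrier A"
      using psi_car f_car z1 assms by simp
    then show ?thesis using 3 x assms twist_back[OF assms(2-4) z1] z1 psi_one fpq
      by (simp add: z1_def[symmetric])
  qed
qed

text \<open>The inductive step of the cancellation lemma below: condition 2 with condition 4.\<close>
lemma cancel_step:
  assumes I: "p \<in> I" "q \<in> I" "q < p"
    and car: "z1 \<in> carrier A" "z2 \<in> carrier A"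
    and eq: "z2 \<otimes>\<^bsub>A\<^esub> psi q (\<not> e) z1 = \<one>\<^bsub>A\<^esub>"
  shows "(psi p e' z2 \<otimes>\<^bsub>A\<^esub> f p e' q (\<not> e)) \<otimes>\<^bsub>A\<^esub> psi q (\<not> e) (psi p e' z1 \<otimes>\<^bsub>A\<^esub> f p e' q e) = \<one>\<^bsub>A\<^esub>"
proof -
  have fcar: "f p e' q e \<in> carrier A" "f p e' q (\<not> e) \<in> carrier A" using f_car I by auto
  have pc: "\<And>s t a. s \<in> I \<Longrightarrow> a \<in> carrier A \<Longrightarrow> psi s t a \<in> carrier A" using psi_car by blast
  have "(psi p e' z2 \<otimes>\<^bsub>A\<^esub> f p e' q (\<not> e)) \<otimes>\<^bsub>A\<^esub> psi q (\<not> e) (psi p e' z1 \<otimes>\<^bsub>A\<^esub> f p e' q e)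
     = psi p e' z2 \<otimes>\<^bsub>A\<^esub> (f p e' q (\<not> e) \<otimes>\<^bsub>A\<^esub> (psi q (\<not> e) (psi p e' z1) \<otimes>\<^bsub>A\<^esub> psi q (\<not> e) (f p e' q e)))"
    using car fcar I by (simp add: psi_mult pc A.m_assoc)
  also have "\<dots> = psi p e' z2 \<otimes>\<^bsub>A\<^esub>
                 (psi p e' (psi q (\<not> e) z1) \<otimes>\<^bsub>A\<^esub> (f p e' q (\<not> e) \<otimes>\<^bsub>A\<^esub> psi q (\<not> e) (f p e' q e)))"
    using c4_left[of p q z1 "psi q (\<not> e) (f p e' q e)" e' "\<not> e"] car fcar I pc by simp
  also have "\<dots> = psi p e' (z2 \<otimes>\<^bsub>A\<^esub> psi q (\<not> e) z1)"
    using c2[of p q e' e] car I pc by (simp add: psi_mult A.m_assoc)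
  also have "\<dots> = \<one>\<^bsub>A\<^esub>" using eq psi_one I by simp
  finally show ?thesis .
qed

lemma nf_mult_cancel:
  assumes "normal_word I w" "q \<in> I"
  shows "fst (nf_mult A f psi (fst (nf_mult A f psi w q e)) q (\<not> e)) = w
    \<and> snd (nf_mult A f psi (fst (nf_mult A f psi w q e)) q (\<not> e))
        \<otimes>\<^bsub>A\<^esub> psi q (\<not> e) (snd (nf_mult A f psi w q e)) = \<one>\<^bsub>A\<^esub>"
  using assms(1)
proof (induction w)
  case Nil then show ?case using assms by (simp add: psi_one)
next
  case (Cons x u)
  obtain p e' where x: "x = (p, e')" by (cases x)
  have p: "p \<in> I" and uI: "normal_word I u" and uI': "set u \<subseteq> I \<times> UNIV"
    using Cons.prems x by (auto simp: normal_word_Cons normal_word_def)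
  consider "q < p" | "p < q" | "p = q" "e' = (\<not> e)" | "p = q" "e' = e" by fastforce
  then show ?case
  proof cases
    case 1
    define u1 where "u1 = fst (nf_mult A f psi u q e)"
    define z1 where "z1 = snd (nf_mult A f psi u q e)"
    define z2 where "z2 = snd (nf_mult A f psi u1 q (\<not> e))"
    have IH: "fst (nf_mult A f psi u1 q (\<not> e)) = u" "z2 \<otimes>\<^bsub>A\<^esub> psi q (\<not> e) z1 = \<one>\<^bsub>A\<^esub>"
      using Cons.IH[OF uI] unfolding u1_def z1_def z2_def by auto
    have "set u1 \<subseteq> I \<times> UNIV" unfolding u1_def using nf_mult_set[of A f psi u q e] uI' assms by auto
    then have car: "z1 \<in> carrier A" "z2 \<in> carrier A"
      unfolding z1_def z2_def using nf_mult_car uI' assms by auto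
    show ?thesis using 1 x IH cancel_step[OF p assms(2) 1 car IH(2), of e']
      unfolding u1_def z1_def z2_def by simp
  next
    case 2
    then have "\<not> q < p" "p \<noteq> q" by auto
    then have "nf_mult A f psi ((p, e') # u) q e = ((q, e) # (p, e') # u, \<one>\<^bsub>A\<^esub>)" by simp
    moreover have "nf_mult A f psi ((q, e) # (p, e') # u) q (\<not> e) = ((p, e') # u, \<one>\<^bsub>A\<^esub>)" by simp
    ultimately show ?thesis using x assms psi_one[of q "\<not> e"] by simp
  next
    case 3
    have "\<forall>y\<in>set u. fst y < q \<or> y = (q, \<not> e)"
      using Cons.prems x 3 by (force simp: normal_word_Cons)
    then have "nf_mult A f psi u q (\<not> e) = ((q, \<not> e) # u, \<one>\<^bsub>A\<^esub>)" by (rule nf_mult_top)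
    then show ?thesis using 3 x assms by (simp add: psi_one)
  next
    case 4 then show ?thesis using x assms by (simp add: psi_one)
  qed
qed

lemma act_word_commute:
  assumes s: "normal_pair (w, a)" and I: "p \<in> I" "q \<in> I" "q < p"
  shows "act_word A f psi [LX p e, LX q d] (w, a)
       = act_word A f psi ([LX q d, LX p e] @ aword A (f p e q d)) (w, a)"
proof -
  have w: "normal_word I w" and a: "a \<in> carrier A" using s by (auto simp: normal_pair_def)
  have wI: "set w \<subseteq> I \<times> UNIV" using w by (simp add: normal_word_def)
  define w1 where "w1 = fst (nf_mult A f psi w p e)"
  define z1 where "z1 = snd (nf_mult A f psi w p e)"
  define z2 where "z2 = snd (nf_mult A f psi w1 q d)"
  define v1 where "v1 = fst (nf_mult A f psi w q d)"
  define y1 where "y1 = snd (nf_mult A f psi w q d)"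
  define y2 where "y2 = snd (nf_mult A f psi v1 p e)"
  have C: "fst (nf_mult A f psi w1 q d) = fst (nf_mult A f psi v1 p e)"
    "z2 \<otimes>\<^bsub>A\<^esub> psi q d z1 = y2 \<otimes>\<^bsub>A\<^esub> psi p e y1 \<otimes>\<^bsub>A\<^esub> f p e q d"
    using nf_mult_commute[OF w I, of e d] unfolding w1_def z1_def z2_def v1_def y1_def y2_def by auto
  have "set w1 \<subseteq> I \<times> UNIV" "set v1 \<subseteq> I \<times> UNIV"
    unfolding w1_def v1_def using nf_mult_set[of A f psi w] wI I by auto
  then have car: "z1 \<in> carrier A" "z2 \<in> carrier A" "y1 \<in> carrier A" "y2 \<in> carrier A"
    unfolding z1_def z2_def y1_def y2_def using nf_mult_car wI I by auto
  have fc: "f p e q d \<in> carrier A" using f_car I by simp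
  have pc: "\<And>s t x. s \<in> I \<Longrightarrow> x \<in> carrier A \<Longrightarrow> psi s t x \<in> carrier A" using psi_car by blast
  have "z2 \<otimes>\<^bsub>A\<^esub> psi q d (z1 \<otimes>\<^bsub>A\<^esub> psi p e a) = (z2 \<otimes>\<^bsub>A\<^esub> psi q d z1) \<otimes>\<^bsub>A\<^esub> psi q d (psi p e a)"
    using car a pc I by (simp add: psi_mult A.m_assoc)
  also have "\<dots> = y2 \<otimes>\<^bsub>A\<^esub> psi p e y1 \<otimes>\<^bsub>A\<^esub> (f p e q d \<otimes>\<^bsub>A\<^esub> psi q d (psi p e a))"
    using C car a pc I fc by (simp add: A.m_assoc)
  also have "\<dots> = y2 \<otimes>\<^bsub>A\<^esub> psi p e y1 \<otimes>\<^bsub>A\<^esub> (psi p e (psi q d a) \<otimes>\<^bsub>A\<^esub> f p e q d)"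
    using c4[of p q a e d] I a by simp
  also have "\<dots> = (y2 \<otimes>\<^bsub>A\<^esub> psi p e (y1 \<otimes>\<^bsub>A\<^esub> psi q d a)) \<otimes>\<^bsub>A\<^esub> f p e q d"
    using car a pc I fc by (simp add: psi_mult A.m_assoc)
  finally have "z2 \<otimes>\<^bsub>A\<^esub> psi q d (z1 \<otimes>\<^bsub>A\<^esub> psi p e a) = (y2 \<otimes>\<^bsub>A\<^esub> psi p e (y1 \<otimes>\<^bsub>A\<^esub> psi q d a)) \<otimes>\<^bsub>A\<^esub> f p e q d" .
  moreover have "y2 \<otimes>\<^bsub>A\<^esub> psi p e (y1 \<otimes>\<^bsub>A\<^esub> psi q d a) \<in> carrier A" using car a pc I by simp
  ultimately show ?thesis using C(1) fc
    by (simp add: act_word_append act_word_aword w1_def z1_def z2_def v1_def y1_def y2_def)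
qed

lemma act_word_cancel:
  assumes s: "normal_pair (w, a)" and q: "q \<in> I"
  shows "act_word A f psi [LX q e, LX q (\<not> e)] (w, a) = (w, a)"
proof -
  have w: "normal_word I w" and a: "a \<in> carrier A" using s by (auto simp: normal_pair_def)
  have wI: "set w \<subseteq> I \<times> UNIV" using w by (simp add: normal_word_def)
  define w1 where "w1 = fst (nf_mult A f psi w q e)"
  define z1 where "z1 = snd (nf_mult A f psi w q e)"
  define z2 where "z2 = snd (nf_mult A f psi w1 q (\<not> e))"
  have C: "fst (nf_mult A f psi w1 q (\<not> e)) = w" "z2 \<otimes>\<^bsub>A\<^esub> psi q (\<not> e) z1 = \<one>\<^bsub>A\<^esub>"
    using nf_mult_cancel[OF w q, of e] unfolding w1_def z1_def z2_def by auto
  have "set w1 \<subseteq> I \<times> UNIV" unfolding w1_def using nf_mult_set[of A f psi w q e] wI q by auto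
  then have car: "z1 \<in> carrier A" "z2 \<in> carrier A"
    unfolding z1_def z2_def using nf_mult_car wI q by auto
  have "z2 \<otimes>\<^bsub>A\<^esub> psi q (\<not> e) (z1 \<otimes>\<^bsub>A\<^esub> psi q e a)
      = (z2 \<otimes>\<^bsub>A\<^esub> psi q (\<not> e) z1) \<otimes>\<^bsub>A\<^esub> psi q (\<not> e) (psi q e a)"
    using car a q psi_car by (simp add: psi_mult A.m_assoc)
  also have "\<dots> = a" using C c5[OF q a] a by simp
  finally show ?thesis using C(1) by (simp add: w1_def z1_def z2_def)
qed

lemma act_word_rel:
  assumes lr: "(l, r) \<in> S" and s: "normal_pair s"
  shows "act_word A f psi l s = act_word A f psi r s"
proof -
  obtain w a where sw: "s = (w, a)" by (cases s)
  have a: "a \<in> carrier A" and wI: "set w \<subseteq> I \<times> UNIV"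
    using s sw by (auto simp: normal_pair_def normal_word_def)
  from lr consider
      (AA) b b' where "l = [LA b, LA b']" "r = aword A (b \<otimes>\<^bsub>A\<^esub> b')" "b \<in> carrier A" "b' \<in> carrier A"
    | (AX) b p e where "l = [LA b, LX p e]" "r = LX p e # aword A (psi p e b)" "b \<in> carrier A" "p \<in> I"
    | (XX) p q e d where "l = [LX p e, LX q d]" "r = [LX q d, LX p e] @ aword A (f p e q d)"
        "p \<in> I" "q \<in> I" "q < p"
    | (XX') q e where "l = [LX q e, LX q (\<not> e)]" "r = []" "q \<in> I"
    unfolding G_rels_def by blast
  then show ?thesis
  proof cases
    case AA
    then show ?thesis using sw a by (simp add: act_word_aword A.m_assoc)
  next
    case AX
    then show ?thesis using sw a nf_mult_car[OF wI AX(4)] psi_car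
      by (simp add: act_word_aword A.m_assoc psi_mult)
  next
    case XX
    then show ?thesis using act_word_commute s sw by simp
  next
    case XX'
    then show ?thesis using act_word_cancel s sw by simp
  qed
qed

lemma act_word_pres_eq: "PE u v \<Longrightarrow> normal_pair s \<Longrightarrow> act_word A f psi u s = act_word A f psi v s"
proof (induction arbitrary: s rule: pres_eq.induct)
  case (pe_rel l r w1 w2)
  have "normal_pair (act_word A f psi w1 s)" using act_word_normal[OF pe_rel(4,6)] .
  then show ?case using act_word_rel[OF pe_rel(1)] by (simp add: act_word_append)
qed simp_all

lemma aword_inj:
  assumes "a \<in> carrier A" "b \<in> carrier A" "PE (aword A a) (aword A b)"
  shows "a = b"
  using act_word_pres_eq[OF assms(3) normal_pair_init] assms by (simp add: act_word_aword)

end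

section \<open>From a factor system to an extension\<close>

lemma schreier_ext_exact:
  assumes G: "group G" and A: "group A" and B: "group B"
    and pi: "\<pi> \<in> hom G B" "\<pi> ` carrier G = carrier B"
    and iota: "\<iota> \<in> hom A G" "inj_on \<iota> (carrier A)" "\<iota> ` carrier A = kernel G B \<pi>"
  shows "schreier_ext G A B"
proof -
  interpret \<pi>: group_hom G B \<pi> using G B pi(1) by (simp add: group_hom_def group_hom_axioms_def)
  have "\<iota> \<in> hom A (G\<lparr>carrier := kernel G B \<pi>\<rparr>)"
    using iota(1,3) by (auto simp: hom_def)
  then have "\<iota> \<in> iso A (G\<lparr>carrier := kernel G B \<pi>\<rparr>)"
    using iota(2,3) by (simp add: iso_def bij_betw_def)
  then have "G\<lparr>carrier := kernel G B \<pi>\<rparr> \<cong> A"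
    by (intro group.iso_sym[OF A] is_isoI)
  then show ?thesis
    unfolding schreier_ext_def using G \<pi>.normal_kernel \<pi>.FactGroup_iso[OF pi(2)] by blast
qed

lemma kernel_comp_bij:
  assumes phi: "bij_betw phi (carrier G) (carrier P)"
  shows "kernel G B (\<pi> \<circ> phi) = inv_into (carrier G) phi ` kernel P B \<pi>"
proof (intro equalityI subsetI)
  fix g assume "g \<in> kernel G B (\<pi> \<circ> phi)"
  then have "g \<in> carrier G" "phi g \<in> kernel P B \<pi>"
    using bij_betwE[OF phi] by (auto simp: kernel_def)
  then show "g \<in> inv_into (carrier G) phi ` kernel P B \<pi>"
    using bij_betw_inv_into_left[OF phi] by (metis image_eqI)
next
  fix g assume "g \<in> inv_into (carrier G) phi ` kernel P B \<pi>"
  then obtain C where "C \<in> kernel P B \<pi>" "g = inv_into (carrier G) phi C" by blast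
  then show "g \<in> kernel G B (\<pi> \<circ> phi)"
    using bij_betwE[OF bij_betw_inv_into[OF phi]] bij_betw_inv_into_right[OF phi]
    by (auto simp: kernel_def)
qed

fun x_part :: "('a, 'i) gletter list \<Rightarrow> ('i \<times> bool) list" where
  "x_part [] = []"
| "x_part (LA a # w) = x_part w"
| "x_part (LX p e # w) = (p, e) # x_part w"

lemma x_part_append: "x_part (u @ v) = x_part u @ x_part v"
  by (induction u rule: x_part.induct) auto

lemma x_part_aword: "x_part (aword A a) = []"
  by (simp add: aword_def)

lemma x_part_x_letters: "x_part (map x_letter v) = v"
  by (induction v) (auto simp: x_letter_def)

lemma x_part_nf_word: "x_part (nf_word A v a) = rev v"
  by (simp add: nf_word_def x_part_append x_part_aword x_part_x_letters)

context factor_data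
begin

abbreviation "cls \<equiv> pres_class Y S"
abbreviation "PM \<equiv> pres_monoid Y S"

lemma x_part_lists: "u \<in> lists Y \<Longrightarrow> x_part u \<in> lists (B_gens I)"
  by (induction u rule: x_part.induct) (auto simp: G_gens_def B_gens_def)

text \<open>Erasing A-letters respects the relations: each relation of S becomes trivial or a
  relation of B.\<close>
lemma x_part_PE: "PE u v \<Longrightarrow> PB I (x_part u) (x_part v)"
proof (induction rule: pres_eq.induct)
  case (pe_refl w) then show ?case using x_part_lists by (auto intro: pres_eq.pe_refl)
next
  case (pe_sym u v) then show ?case by (auto intro: pres_eq.pe_sym)
next
  case (pe_trans u v w) then show ?case by (auto intro: pres_eq.pe_trans)
next
  case (pe_rel l r w1 w2)
  have sl: "x_part l \<in> lists (B_gens I)" "x_part w1 \<in> lists (B_gens I)" "x_part w2 \<in> lists (B_gens I)"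
    using pe_rel x_part_lists by auto
  from pe_rel(1) have "PB I (x_part l) (x_part r)"
    unfolding G_rels_def
  proof (elim UnE CollectE exE conjE)
    fix p q e d assume "(l, r) = ([LX p e, LX q d], [LX q d, LX p e] @ aword A (f p e q d))"
      "p \<in> I" "q \<in> I" "q < p"
    then show ?thesis using B_commute by (auto simp: x_part_append x_part_aword)
  next
    fix q e assume "(l, r) = ([LX q e, LX q (\<not> e)], [])" "q \<in> I"
    then show ?thesis using B_cancel by auto
  qed (use sl(1) in \<open>auto simp: x_part_aword intro: pres_eq.pe_refl\<close>)
  then show ?case using pres_eq_cong[of "B_gens I" "B_rels I" "x_part l" "x_part r" "x_part w1" "x_part w2"] sl
    by (simp add: x_part_append)
qed

definition proj :: "('a, 'i) gletter list set \<Rightarrow> ('i \<times> bool) list set" where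
  "proj C = clsB I (x_part (SOME w. w \<in> lists Y \<and> C = cls w))"

definition emb :: "'a \<Rightarrow> ('a, 'i) gletter list set" where
  "emb a = cls (aword A a)"

lemma proj_cls: assumes "w \<in> lists Y" shows "proj (cls w) = clsB I (x_part w)"
proof -
  define w' where "w' = (SOME w'. w' \<in> lists Y \<and> cls w = cls w')"
  have "w' \<in> lists Y \<and> cls w = cls w'" unfolding w'_def by (rule someI[of _ w]) (use assms in simp)
  then have "PE w w'" using pres_class_eq_iff[OF assms, of S w'] by (simp only:)
  then have "PB I (x_part w) (x_part w')" by (rule x_part_PE)
  then have "clsB I (x_part w) = clsB I (x_part w')"
    by (rule pres_class_eq_iff[OF x_part_lists[OF assms], THEN iffD2])
  then show ?thesis unfolding proj_def w'_def by simp
qed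

lemma proj_hom: "proj \<in> hom PM (BM I)"
proof (rule homI)
  fix C assume "C \<in> carrier PM"
  then obtain w where "w \<in> lists Y" "C = cls w" by (auto simp: pres_carrier)
  then show "proj C \<in> carrier (BM I)" using proj_cls x_part_lists by (simp add: pres_carrier)
next
  fix C D assume "C \<in> carrier PM" "D \<in> carrier PM"
  then obtain u v where "u \<in> lists Y" "C = cls u" "v \<in> lists Y" "D = cls v"
    by (auto simp: pres_carrier)
  then show "proj (C \<otimes>\<^bsub>PM\<^esub> D) = proj C \<otimes>\<^bsub>BM I\<^esub> proj D"
    using x_part_lists by (simp add: pres_mult proj_cls x_part_append)
qed

lemma proj_onto: "proj ` carrier PM = carrier (BM I)"
proof
  show "proj ` carrier PM \<subseteq> carrier (BM I)" using proj_hom by (auto simp: hom_def)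
next
  show "carrier (BM I) \<subseteq> proj ` carrier PM"
  proof
    fix D assume "D \<in> carrier (BM I)"
    then obtain x where x: "x \<in> lists (B_gens I)" "D = clsB I x" by (auto simp: pres_carrier)
    then have lx: "map x_letter x \<in> lists Y"
      by (intro x_letters_lists) (auto simp: B_gens_def in_lists_conv_set)
    then have "proj (cls (map x_letter x)) = D" using x by (simp add: proj_cls x_part_x_letters)
    then show "D \<in> proj ` carrier PM" using lx by (auto simp: pres_carrier)
  qed
qed

lemma emb_hom: "emb \<in> hom A PM"
proof (rule homI)
  fix a b assume a: "a \<in> carrier A" and b: "b \<in> carrier A"
  have "PE (aword A a @ aword A b) (aword A (a \<otimes>\<^bsub>A\<^esub> b))" by (rule aword_mult[OF a b])
  then show "emb (a \<otimes>\<^bsub>A\<^esub> b) = emb a \<otimes>\<^bsub>PM\<^esub> emb b"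
    using aword_lists a b by (simp add: emb_def pres_mult pres_class_eq_iff[symmetric])
qed (simp add: emb_def pres_carrier aword_lists)

end

context factor_system
begin

lemma emb_inj: "inj_on emb (carrier A)"
  by (rule inj_onI) (auto simp: emb_def pres_class_eq_iff aword_lists intro: aword_inj)

text \<open>The kernel of the projection is exactly A: a word with trivial image in B has
  normal form \<open>([], a)\<close>, because normal words equal in B coincide.\<close>
lemma emb_image: "emb ` carrier A = kernel PM (BM I) proj"
proof
  show "emb ` carrier A \<subseteq> kernel PM (BM I) proj"
    using aword_lists by (auto simp: kernel_def emb_def pres_carrier proj_cls x_part_aword pres_one)
next
  show "kernel PM (BM I) proj \<subseteq> emb ` carrier A"
  proof
    fix C assume C: "C \<in> kernel PM (BM I) proj"
    then obtain w where w: "w \<in> lists Y" "C = cls w" by (auto simp: kernel_def pres_carrier)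
    with C have "clsB I (x_part w) = clsB I []" by (simp add: kernel_def proj_cls pres_one)
    then have triv: "PB I (x_part w) []"
      using pres_class_eq_iff[OF x_part_lists[OF w(1)]] by blast
    define s where "s = act_word A f psi w ([], \<one>\<^bsub>A\<^esub>)"
    have nf: "PE w (nf_word A (fst s) (snd s))" "normal_pair s"
      using normal_form[OF w(1)] unfolding s_def by auto
    have "PB I (rev (fst s)) (x_part w)"
      using x_part_PE[OF nf(1)] by (simp add: x_part_nf_word pres_eq.pe_sym)
    then have "PB I (rev (fst s)) (rev [])" using triv by (auto intro: pres_eq.pe_trans)
    then have "fst s = []"
      using normal_word_PB_unique[of I "fst s" "[]"] nf(2) by (simp add: normal_pair_def)
    then have "C = emb (snd s)"
      using nf(1) w by (simp add: emb_def nf_word_def pres_class_eq_iff)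
    then show "C \<in> emb ` carrier A" using nf(2) by (auto simp: normal_pair_def)
  qed
qed

text \<open>Direction "data \<Longrightarrow> extension": a group isomorphic to P is an extension of A by B,
  by the exact sequence \<open>A \<rightarrow> P \<rightarrow> B\<close> transported along the isomorphism.\<close>
lemma extension:
  assumes G: "group G" and "G \<cong> PM"
  shows "schreier_ext G A (BM I)"
proof -
  obtain phi where phi: "phi \<in> iso G PM" using assms(2) unfolding is_iso_def by blast
  define phinv where "phinv = inv_into (carrier G) phi"
  have phi_bij: "bij_betw phi (carrier G) (carrier PM)" using phi by (simp add: iso_def)
  have phinv_hom: "phinv \<in> hom PM G"
    unfolding phinv_def using group.iso_set_sym[OF G phi] by (simp add: iso_def)
  have phinv_bij: "bij_betw phinv (carrier PM) (carrier G)"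
    unfolding phinv_def by (rule bij_betw_inv_into[OF phi_bij])
  have kernel: "kernel G (BM I) (proj \<circ> phi) = phinv ` kernel PM (BM I) proj"
    unfolding phinv_def by (rule kernel_comp_bij[OF phi_bij])
  show ?thesis
  proof (rule schreier_ext_exact[OF G A.group_axioms B_group])
    show "proj \<circ> phi \<in> hom G (BM I)"
      using phi proj_hom by (auto simp: iso_def intro: hom_compose)
    show "(proj \<circ> phi) ` carrier G = carrier (BM I)"
      unfolding image_comp[symmetric] using phi_bij proj_onto by (simp add: bij_betw_def)
    show "phinv \<circ> emb \<in> hom A G" using emb_hom phinv_hom by (rule hom_compose)
    show "inj_on (phinv \<circ> emb) (carrier A)"
    proof (rule comp_inj_on[OF emb_inj])
      have "emb ` carrier A \<subseteq> carrier PM" using emb_hom by (auto simp: hom_def)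
      then show "inj_on phinv (emb ` carrier A)"
        using bij_betw_imp_inj_on[OF phinv_bij] by (rule inj_on_subset[rotated])
    qed
    show "(phinv \<circ> emb) ` carrier A = kernel G (BM I) (proj \<circ> phi)"
      unfolding kernel image_comp[symmetric] emb_image ..
  qed
qed

end

section \<open>From an extension to a factor system\<close>

lemma (in group) mult_inv_cancel_left: "x \<in> carrier G \<Longrightarrow> y \<in> carrier G \<Longrightarrow> x \<otimes> (inv x \<otimes> y) = y"
  by (simp add: m_assoc[symmetric])

lemma (in group) inv_mult_cancel_left: "x \<in> carrier G \<Longrightarrow> y \<in> carrier G \<Longrightarrow> inv x \<otimes> (x \<otimes> y) = y"
  by (simp add: m_assoc[symmetric])

locale extension_data = G: group G + A: group A
  for G :: "('g, 'n) monoid_scheme" and A :: "('a, 'm) monoid_scheme" +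
  fixes I :: "'i::linorder set" and N :: "'g set"
    and h :: "'g \<Rightarrow> 'a" and th :: "'g set \<Rightarrow> ('i \<times> bool) list set"
  assumes N_normal: "N \<lhd> G"
    and h_iso: "h \<in> iso (G\<lparr>carrier := N\<rparr>) A"
    and th_iso: "th \<in> iso (G Mod N) (BM I)"
begin

interpretation N: normal N G by (rule N_normal)
interpretation B: group "BM I" by (rule B_group)

lemmas G_simps = G.m_assoc G.inv_mult_group G.mult_inv_cancel_left G.inv_mult_cancel_left
  G.r_inv G.l_inv G.r_one G.l_one G.inv_closed G.m_closed

lemma N_sub: "subgroup N G" by (rule normal_imp_subgroup[OF N_normal])

lemma N_car: "n \<in> N \<Longrightarrow> n \<in> carrier G" using N_sub by (meson subgroup.mem_carrier)

lemma N_mult: "x \<in> N \<Longrightarrow> y \<in> N \<Longrightarrow> x \<otimes>\<^bsub>G\<^esub> y \<in> N" using N_sub by (meson subgroup.m_closed)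

lemma N_one: "\<one>\<^bsub>G\<^esub> \<in> N" using N_sub by (meson subgroup.one_closed)

lemma h_bij: "bij_betw h N (carrier A)" using h_iso by (simp add: iso_def)

lemma h_mult: "x \<in> N \<Longrightarrow> y \<in> N \<Longrightarrow> h (x \<otimes>\<^bsub>G\<^esub> y) = h x \<otimes>\<^bsub>A\<^esub> h y"
  using h_iso by (auto simp: iso_def hom_def)

lemma h_car: "x \<in> N \<Longrightarrow> h x \<in> carrier A" using h_bij by (meson bij_betwE)

definition hinv :: "'a \<Rightarrow> 'g" where "hinv = inv_into N h"

lemma hinv_N: "a \<in> carrier A \<Longrightarrow> hinv a \<in> N"
  unfolding hinv_def using h_bij by (meson bij_betwE bij_betw_inv_into)

lemma h_hinv: "a \<in> carrier A \<Longrightarrow> h (hinv a) = a"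
  unfolding hinv_def using h_bij by (meson bij_betw_inv_into_right)

lemma hinv_h: "n \<in> N \<Longrightarrow> hinv (h n) = n"
  unfolding hinv_def using h_bij by (meson bij_betw_inv_into_left)

lemma hinv_car: "a \<in> carrier A \<Longrightarrow> hinv a \<in> carrier G" using hinv_N N_car by blast

lemma h_one: "h \<one>\<^bsub>G\<^esub> = \<one>\<^bsub>A\<^esub>"
proof -
  have "h \<one>\<^bsub>G\<^esub> \<otimes>\<^bsub>A\<^esub> h \<one>\<^bsub>G\<^esub> = h \<one>\<^bsub>G\<^esub> \<otimes>\<^bsub>A\<^esub> \<one>\<^bsub>A\<^esub>"
    using h_mult[OF N_one N_one] h_car[OF N_one] by simp
  then show ?thesis using h_car[OF N_one] by simp
qed

lemma hinv_one: "hinv \<one>\<^bsub>A\<^esub> = \<one>\<^bsub>G\<^esub>" using hinv_h[OF N_one] h_one by simp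

lemma hinv_mult: "a \<in> carrier A \<Longrightarrow> b \<in> carrier A \<Longrightarrow> hinv (a \<otimes>\<^bsub>A\<^esub> b) = hinv a \<otimes>\<^bsub>G\<^esub> hinv b"
  using h_mult[OF hinv_N hinv_N, of a b] h_hinv hinv_h[OF N_mult[OF hinv_N hinv_N, of a b]] by simp

lemma hinv_inj: "a \<in> carrier A \<Longrightarrow> b \<in> carrier A \<Longrightarrow> hinv a = hinv b \<Longrightarrow> a = b"
  using h_hinv by metis

lemma th_car: "Q \<in> carrier (G Mod N) \<Longrightarrow> th Q \<in> carrier (BM I)"
  using th_iso by (auto simp: iso_def hom_def)

lemma th_bij: "bij_betw th (carrier (G Mod N)) (carrier (BM I))" using th_iso by (simp add: iso_def)

lemma coset_car: "g \<in> carrier G \<Longrightarrow> N #>\<^bsub>G\<^esub> g \<in> carrier (G Mod N)"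
  by (simp add: carrier_FactGroup)

lemma th_mult:
  "Q1 \<in> carrier (G Mod N) \<Longrightarrow> Q2 \<in> carrier (G Mod N) \<Longrightarrow> th (Q1 <#>\<^bsub>G\<^esub> Q2) = th Q1 \<otimes>\<^bsub>BM I\<^esub> th Q2"
  using th_iso by (auto simp: iso_def hom_def FactGroup_def)

lemma coset_mult:
  "a \<in> carrier G \<Longrightarrow> b \<in> carrier G \<Longrightarrow>
     th (N #>\<^bsub>G\<^esub> (a \<otimes>\<^bsub>G\<^esub> b)) = th (N #>\<^bsub>G\<^esub> a) \<otimes>\<^bsub>BM I\<^esub> th (N #>\<^bsub>G\<^esub> b)"
  using th_mult[OF coset_car coset_car, of a b] N.rcos_sum by simp

lemma th_one: "th N = \<one>\<^bsub>BM I\<^esub>"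
proof -
  interpret Q: group "G Mod N" by (rule N.factorgroup_is_group)
  have "th \<in> hom (G Mod N) (BM I)" using th_iso by (simp add: iso_def)
  then have "th \<one>\<^bsub>G Mod N\<^esub> = \<one>\<^bsub>BM I\<^esub>" using hom_one Q.group_axioms B_group by blast
  then show ?thesis by simp
qed

lemma th_coset_one: "th (N #>\<^bsub>G\<^esub> \<one>\<^bsub>G\<^esub>) = clsB I []"
  using th_one N_sub by (simp add: pres_one subgroup.subset)

lemma coset_absorb: "g \<in> carrier G \<Longrightarrow> n \<in> N \<Longrightarrow> th (N #>\<^bsub>G\<^esub> (g \<otimes>\<^bsub>G\<^esub> n)) = th (N #>\<^bsub>G\<^esub> g)"
proof -
  assume g: "g \<in> carrier G" and n: "n \<in> N"
  have "N #>\<^bsub>G\<^esub> n = N" using subgroup.rcos_const[OF N_sub G.group_axioms n] .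
  then have "th (N #>\<^bsub>G\<^esub> n) = \<one>\<^bsub>BM I\<^esub>" using th_one by simp
  then show ?thesis using coset_mult[OF g N_car[OF n]] th_car[OF coset_car[OF g]] B.r_one by simp
qed

lemma coset_eq:
  assumes a: "a \<in> carrier G" and b: "b \<in> carrier G" and e: "th (N #>\<^bsub>G\<^esub> a) = th (N #>\<^bsub>G\<^esub> b)"
  shows "a \<otimes>\<^bsub>G\<^esub> inv\<^bsub>G\<^esub> b \<in> N"
proof -
  have "N #>\<^bsub>G\<^esub> a = N #>\<^bsub>G\<^esub> b" using e th_bij coset_car[OF a] coset_car[OF b]
    by (meson bij_betw_def inj_onD)
  then have "a \<in> N #>\<^bsub>G\<^esub> b" using G.rcos_self[OF a N_sub] by simp
  then show ?thesis using subgroup.rcos_module_imp[OF N_sub G.group_axioms b] by simp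
qed

definition rep :: "'i \<Rightarrow> 'g" where
  "rep p = (SOME g. g \<in> carrier G \<and> th (N #>\<^bsub>G\<^esub> g) = clsB I [(p, True)])"

lemma rep: "p \<in> I \<Longrightarrow> rep p \<in> carrier G \<and> th (N #>\<^bsub>G\<^esub> rep p) = clsB I [(p, True)]"
proof -
  assume p: "p \<in> I"
  have "clsB I [(p, True)] \<in> carrier (BM I)" using p by (simp add: pres_carrier B_gens_def)
  then obtain Q where Q: "Q \<in> carrier (G Mod N)" "th Q = clsB I [(p, True)]"
    using th_bij by (metis bij_betw_def imageE)
  then obtain g where "g \<in> carrier G" "Q = N #>\<^bsub>G\<^esub> g" by (auto simp: carrier_FactGroup)
  then have "\<exists>g. g \<in> carrier G \<and> th (N #>\<^bsub>G\<^esub> g) = clsB I [(p, True)]" using Q by blast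
  then show ?thesis unfolding rep_def by (rule someI_ex)
qed

definition lift :: "'i \<Rightarrow> bool \<Rightarrow> 'g" where
  "lift p e = (if e then rep p else inv\<^bsub>G\<^esub> (rep p))"

lemma lift_car: "p \<in> I \<Longrightarrow> lift p e \<in> carrier G"
  using rep by (simp add: lift_def)

lemma lift_not: "p \<in> I \<Longrightarrow> lift p (\<not> e) = inv\<^bsub>G\<^esub> (lift p e)"
  using rep by (simp add: lift_def)

lemma th_lift: "p \<in> I \<Longrightarrow> th (N #>\<^bsub>G\<^esub> lift p e) = clsB I [(p, e)]"
proof (cases e)
  case True
  assume p: "p \<in> I" then show ?thesis using True rep by (simp add: lift_def)
next
  case False
  assume p: "p \<in> I"
  have t: "rep p \<in> carrier G" "th (N #>\<^bsub>G\<^esub> rep p) = clsB I [(p, True)]" using rep[OF p] by auto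
  have lp: "[(p, False)] \<in> lists (B_gens I)" "[(p, True)] \<in> lists (B_gens I)" using p by (auto simp: B_gens_def)
  have "th (N #>\<^bsub>G\<^esub> inv\<^bsub>G\<^esub> rep p) \<otimes>\<^bsub>BM I\<^esub> clsB I [(p, True)] = \<one>\<^bsub>BM I\<^esub>"
    using coset_mult[of "inv\<^bsub>G\<^esub> rep p" "rep p"] t th_coset_one by (simp add: pres_one)
  moreover have "clsB I [(p, False)] \<otimes>\<^bsub>BM I\<^esub> clsB I [(p, True)] = \<one>\<^bsub>BM I\<^esub>"
    using B_cancel[OF p, of False] lp by (simp add: pres_mult pres_one pres_class_eq_iff)
  moreover have "th (N #>\<^bsub>G\<^esub> inv\<^bsub>G\<^esub> rep p) \<in> carrier (BM I)" using th_car coset_car t by simp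
  moreover have "clsB I [(p, b)] \<in> carrier (BM I)" for b using lp p by (simp add: pres_carrier B_gens_def)
  ultimately have "th (N #>\<^bsub>G\<^esub> inv\<^bsub>G\<^esub> rep p) = clsB I [(p, False)]"
    using B.right_cancel by metis
  then show ?thesis using False by (simp add: lift_def)
qed

definition psiG :: "'i \<Rightarrow> bool \<Rightarrow> 'a \<Rightarrow> 'a" where
  "psiG p e a = h (inv\<^bsub>G\<^esub> (lift p e) \<otimes>\<^bsub>G\<^esub> hinv a \<otimes>\<^bsub>G\<^esub> lift p e)"

definition commG :: "'i \<Rightarrow> bool \<Rightarrow> 'i \<Rightarrow> bool \<Rightarrow> 'g" where
  "commG p e q d = inv\<^bsub>G\<^esub> (lift q d \<otimes>\<^bsub>G\<^esub> lift p e) \<otimes>\<^bsub>G\<^esub> (lift p e \<otimes>\<^bsub>G\<^esub> lift q d)"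

definition fG :: "'i \<Rightarrow> bool \<Rightarrow> 'i \<Rightarrow> bool \<Rightarrow> 'a" where
  "fG p e q d = h (commG p e q d)"

text \<open>Since B is abelian on these generators, the commutator lies in N.\<close>
lemma commG_N:
  assumes p: "p \<in> I" and q: "q \<in> I" and pq: "q < p"
  shows "commG p e q d \<in> N"
proof -
  have l: "lift p e \<in> carrier G" "lift q d \<in> carrier G" using lift_car p q by auto
  have lp: "[(p, e)] \<in> lists (B_gens I)" "[(q, d)] \<in> lists (B_gens I)" using p q by (auto simp: B_gens_def)
  have "clsB I [(p, e), (q, d)] = clsB I [(q, d), (p, e)]"
    using B_commute[OF p q pq, of e d] lp by (simp add: pres_class_eq_iff)
  then have "th (N #>\<^bsub>G\<^esub> (lift p e \<otimes>\<^bsub>G\<^esub> lift q d)) = th (N #>\<^bsub>G\<^esub> (lift q d \<otimes>\<^bsub>G\<^esub> lift p e))"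
    using coset_mult l th_lift p q lp by (simp add: pres_mult)
  then have "(lift p e \<otimes>\<^bsub>G\<^esub> lift q d) \<otimes>\<^bsub>G\<^esub> inv\<^bsub>G\<^esub> (lift q d \<otimes>\<^bsub>G\<^esub> lift p e) \<in> N"
    using coset_eq l by simp
  then have "inv\<^bsub>G\<^esub> (lift q d \<otimes>\<^bsub>G\<^esub> lift p e) \<otimes>\<^bsub>G\<^esub>
      ((lift p e \<otimes>\<^bsub>G\<^esub> lift q d) \<otimes>\<^bsub>G\<^esub> inv\<^bsub>G\<^esub> (lift q d \<otimes>\<^bsub>G\<^esub> lift p e)) \<otimes>\<^bsub>G\<^esub> (lift q d \<otimes>\<^bsub>G\<^esub> lift p e) \<in> N"
    using N.inv_op_closed1 l by simp
  then show ?thesis unfolding commG_def using l by (simp add: G_simps)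
qed

lemma psiG_N: "p \<in> I \<Longrightarrow> a \<in> carrier A \<Longrightarrow> inv\<^bsub>G\<^esub> (lift p e) \<otimes>\<^bsub>G\<^esub> hinv a \<otimes>\<^bsub>G\<^esub> lift p e \<in> N"
  using N.inv_op_closed1 lift_car hinv_N by blast

lemma psiG_car [simp]: "p \<in> I \<Longrightarrow> a \<in> carrier A \<Longrightarrow> psiG p e a \<in> carrier A"
  unfolding psiG_def using psiG_N h_car by blast

lemma hinv_psiG [simp]:
  "p \<in> I \<Longrightarrow> a \<in> carrier A \<Longrightarrow> hinv (psiG p e a) = inv\<^bsub>G\<^esub> (lift p e) \<otimes>\<^bsub>G\<^esub> hinv a \<otimes>\<^bsub>G\<^esub> lift p e"
  unfolding psiG_def using psiG_N hinv_h by blast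

lemma fG_car [simp]: "p \<in> I \<Longrightarrow> q \<in> I \<Longrightarrow> q < p \<Longrightarrow> fG p e q d \<in> carrier A"
  unfolding fG_def using commG_N h_car by blast

lemma hinv_fG [simp]: "p \<in> I \<Longrightarrow> q \<in> I \<Longrightarrow> q < p \<Longrightarrow> hinv (fG p e q d) = commG p e q d"
  unfolding fG_def using commG_N hinv_h by blast

text \<open>Conditions 1-5 hold because, transported into G by hinv, they become group identities
  between the elements \<open>t_p^e\<close>.\<close>
lemmas hinv_simps = hinv_mult hinv_car lift_car lift_not hinv_one

lemma fG_cocycle:
  assumes "p \<in> I" "q \<in> I" "r \<in> I" "q < p" "r < q"
  shows "fG p e q d \<otimes>\<^bsub>A\<^esub> psiG q d (fG p e r g) \<otimes>\<^bsub>A\<^esub> fG q d r g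
       = psiG p e (fG q d r g) \<otimes>\<^bsub>A\<^esub> fG p e r g \<otimes>\<^bsub>A\<^esub> psiG r g (fG p e q d)"
  using assms less_trans[OF assms(5) assms(4)]
  by (intro hinv_inj) (simp_all add: hinv_simps commG_def G_simps)

lemma fG_inverse_right:
  assumes "p \<in> I" "q \<in> I" "q < p"
  shows "fG p e q (\<not> d) \<otimes>\<^bsub>A\<^esub> psiG q (\<not> d) (fG p e q d) = \<one>\<^bsub>A\<^esub>"
  using assms by (intro hinv_inj) (simp_all add: hinv_simps commG_def G_simps)

lemma fG_inverse_left:
  assumes "p \<in> I" "q \<in> I" "q < p"
  shows "psiG p (\<not> e) (fG p e q d) \<otimes>\<^bsub>A\<^esub> fG p (\<not> e) q d = \<one>\<^bsub>A\<^esub>"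
  using assms by (intro hinv_inj) (simp_all add: hinv_simps commG_def G_simps)

lemma psiG_twist:
  assumes "p \<in> I" "q \<in> I" "q < p" "a \<in> carrier A"
  shows "psiG p e (psiG q d a) \<otimes>\<^bsub>A\<^esub> fG p e q d = fG p e q d \<otimes>\<^bsub>A\<^esub> psiG q d (psiG p e a)"
  using assms by (intro hinv_inj) (simp_all add: hinv_simps commG_def G_simps)

lemma psiG_involutive:
  assumes "r \<in> I" "a \<in> carrier A"
  shows "psiG r (\<not> e) (psiG r e a) = a"
  using assms by (intro hinv_inj) (simp_all add: hinv_simps G_simps)

lemma psiG_iso: "p \<in> I \<Longrightarrow> psiG p e \<in> iso A A"
proof -
  assume p: "p \<in> I"
  have "psiG p e \<in> hom A A"
  proof (rule homI)
    fix a b assume "a \<in> carrier A" "b \<in> carrier A"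
    then show "psiG p e (a \<otimes>\<^bsub>A\<^esub> b) = psiG p e a \<otimes>\<^bsub>A\<^esub> psiG p e b"
      using p by (intro hinv_inj) (simp_all add: hinv_simps G_simps)
  qed (use p in simp)
  moreover have "inj_on (psiG p e) (carrier A)"
    by (rule inj_onI) (metis psiG_involutive[OF p])
  moreover have "psiG p e ` carrier A = carrier A"
  proof
    show "carrier A \<subseteq> psiG p e ` carrier A"
      using psiG_involutive[OF p, of _ "\<not> e"] p by (metis psiG_car imageI subsetI)
  qed (use p in auto)
  ultimately show ?thesis by (simp add: iso_iff)
qed

lemma factor_system: "factor_system A I fG psiG"
  by unfold_locales (auto intro: psiG_iso fG_cocycle fG_inverse_right fG_inverse_left psiG_twist psiG_involutive)

end

context extension_data
begin

interpretation E: factor_system A I fG psiG by (rule factor_system)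

definition evalG_letter :: "('a, 'i) gletter \<Rightarrow> 'g" where
  "evalG_letter l = (case l of LA a \<Rightarrow> hinv a | LX p e \<Rightarrow> lift p e)"

definition evalG :: "('a, 'i) gletter list \<Rightarrow> 'g" where
  "evalG w = foldr (\<lambda>l acc. evalG_letter l \<otimes>\<^bsub>G\<^esub> acc) w \<one>\<^bsub>G\<^esub>"

lemma evalG_Nil [simp]: "evalG [] = \<one>\<^bsub>G\<^esub>"
  by (simp add: evalG_def)

lemma evalG_Cons [simp]: "evalG (l # w) = evalG_letter l \<otimes>\<^bsub>G\<^esub> evalG w"
  by (simp add: evalG_def)

lemma evalG_letter_car: "l \<in> E.Y \<Longrightarrow> evalG_letter l \<in> carrier G"
  by (auto simp: G_gens_def evalG_letter_def hinv_car lift_car)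

lemma evalG_car: "w \<in> lists E.Y \<Longrightarrow> evalG w \<in> carrier G"
  by (induction w) (auto simp: evalG_letter_car)

lemma evalG_append: "u \<in> lists E.Y \<Longrightarrow> v \<in> lists E.Y \<Longrightarrow> evalG (u @ v) = evalG u \<otimes>\<^bsub>G\<^esub> evalG v"
  by (induction u) (auto simp: evalG_letter_car evalG_car G.m_assoc)

lemma evalG_aword: "a \<in> carrier A \<Longrightarrow> evalG (aword A a) = hinv a"
  by (auto simp: aword_def evalG_letter_def hinv_one hinv_car)

lemma evalG_rel: "(l, r) \<in> E.S \<Longrightarrow> evalG l = evalG r"
  unfolding G_rels_def
proof (elim UnE CollectE exE conjE)
  fix a b assume "(l, r) = ([LA a, LA b], aword A (a \<otimes>\<^bsub>A\<^esub> b))"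
    "a \<in> carrier A - {\<one>\<^bsub>A\<^esub>}" "b \<in> carrier A - {\<one>\<^bsub>A\<^esub>}"
  then show ?thesis by (simp add: evalG_aword evalG_letter_def hinv_mult hinv_car)
next
  fix a p e assume "(l, r) = ([LA a, LX p e], LX p e # aword A (psiG p e a))"
    "a \<in> carrier A - {\<one>\<^bsub>A\<^esub>}" "p \<in> I"
  then show ?thesis by (simp add: evalG_aword evalG_letter_def hinv_car lift_car G_simps)
next
  fix p q e d assume "(l, r) = ([LX p e, LX q d], [LX q d, LX p e] @ aword A (fG p e q d))"
    "p \<in> I" "q \<in> I" "q < p"
  then show ?thesis by (simp add: evalG_aword evalG_letter_def hinv_car lift_car G_simps commG_def)
next
  fix q e assume "(l, r) = ([LX q e, LX q (\<not> e)], [])" "q \<in> I"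
  then show ?thesis by (simp add: evalG_letter_def lift_car lift_not G_simps)
qed

lemma evalG_PE: "E.PE u v \<Longrightarrow> evalG u = evalG v"
proof (induction rule: pres_eq.induct)
  case (pe_rel l r w1 w2)
  then show ?case using evalG_rel[OF pe_rel(1)] by (simp add: evalG_append)
qed auto

lemma evalG_x_letters: "x \<in> lists (B_gens I) \<Longrightarrow> th (N #>\<^bsub>G\<^esub> evalG (map x_letter x)) = clsB I x"
proof (induction x)
  case Nil then show ?case using th_coset_one by simp
next
  case (Cons y x)
  obtain p e where y: "y = (p, e)" by (cases y)
  have p: "p \<in> I" and x: "x \<in> lists (B_gens I)" using Cons.prems y by (auto simp: B_gens_def)
  have "map x_letter x \<in> lists E.Y" using E.x_letters_lists x by (auto simp: B_gens_def in_lists_conv_set)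
  then have "th (N #>\<^bsub>G\<^esub> evalG (map x_letter (y # x)))
      = th (N #>\<^bsub>G\<^esub> lift p e) \<otimes>\<^bsub>BM I\<^esub> th (N #>\<^bsub>G\<^esub> evalG (map x_letter x))"
    using coset_mult lift_car[OF p] evalG_car y by (simp add: evalG_letter_def)
  also have "\<dots> = clsB I [(p, e)] \<otimes>\<^bsub>BM I\<^esub> clsB I x" using th_lift[OF p] Cons.IH[OF x] by simp
  also have "\<dots> = clsB I (y # x)" using pres_mult[of "[(p, e)]" _ x] p x y by (simp add: B_gens_def)
  finally show ?case .
qed

lemma evalG_nf_word:
  assumes v: "normal_word I v" and a: "a \<in> carrier A"
  shows "evalG (nf_word A v a) = evalG (map x_letter (rev v)) \<otimes>\<^bsub>G\<^esub> hinv a"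
    and "th (N #>\<^bsub>G\<^esub> evalG (nf_word A v a)) = clsB I (rev v)"
proof -
  have bv: "rev v \<in> lists (B_gens I)" using v by (auto simp: normal_word_def B_gens_def in_lists_conv_set)
  have lv: "map x_letter (rev v) \<in> lists E.Y"
    using v E.x_letters_lists[of "rev v"] by (simp add: normal_word_def)
  show eq: "evalG (nf_word A v a) = evalG (map x_letter (rev v)) \<otimes>\<^bsub>G\<^esub> hinv a"
    using evalG_append[OF lv E.aword_lists[OF a]] evalG_aword[OF a] by (simp add: nf_word_def)
  show "th (N #>\<^bsub>G\<^esub> evalG (nf_word A v a)) = clsB I (rev v)"
    unfolding eq using coset_absorb[OF evalG_car[OF lv] hinv_N[OF a]] evalG_x_letters[OF bv] by simp
qed

text \<open>Evaluation is injective on P: words with equal values have the same normal form.\<close>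
lemma evalG_inj:
  assumes u: "u \<in> lists E.Y" and v: "v \<in> lists E.Y" and e: "evalG u = evalG v"
  shows "E.PE u v"
proof -
  define su where "su = act_word A fG psiG u ([], \<one>\<^bsub>A\<^esub>)"
  define sv where "sv = act_word A fG psiG v ([], \<one>\<^bsub>A\<^esub>)"
  have nu: "E.PE u (nf_word A (fst su) (snd su))" "E.normal_pair su"
    using E.normal_form[OF u] unfolding su_def by auto
  have nv: "E.PE v (nf_word A (fst sv) (snd sv))" "E.normal_pair sv"
    using E.normal_form[OF v] unfolding sv_def by auto
  have su: "normal_word I (fst su)" "snd su \<in> carrier A"
    and sv: "normal_word I (fst sv)" "snd sv \<in> carrier A"
    using nu(2) nv(2) unfolding E.normal_pair_def by auto
  have "evalG (nf_word A (fst su) (snd su)) = evalG u" using evalG_PE[OF nu(1)] by (rule sym)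
  also have "\<dots> = evalG v" by (rule e)
  also have "\<dots> = evalG (nf_word A (fst sv) (snd sv))" by (rule evalG_PE[OF nv(1)])
  finally have eval_eq: "evalG (nf_word A (fst su) (snd su)) = evalG (nf_word A (fst sv) (snd sv))" .
  have bsu: "rev (fst su) \<in> lists (B_gens I)"
    using su(1) by (auto simp: normal_word_def B_gens_def in_lists_conv_set)
  have "clsB I (rev (fst su)) = clsB I (rev (fst sv))"
    using evalG_nf_word(2)[OF su] evalG_nf_word(2)[OF sv] eval_eq by simp
  then have "PB I (rev (fst su)) (rev (fst sv))" using pres_class_eq_iff[OF bsu] by blast
  then have fst_eq: "fst su = fst sv" by (rule normal_word_PB_unique[OF su(1) sv(1)])
  define x where "x = evalG (map x_letter (rev (fst su)))"
  have x: "x \<in> carrier G"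
    unfolding x_def using su E.x_letters_lists[of "rev (fst su)"] evalG_car by (simp add: normal_word_def)
  have "x \<otimes>\<^bsub>G\<^esub> hinv (snd su) = x \<otimes>\<^bsub>G\<^esub> hinv (snd sv)"
    using eval_eq fst_eq evalG_nf_word(1)[OF su] evalG_nf_word(1)[OF sv] by (simp add: x_def)
  then have "inv\<^bsub>G\<^esub> x \<otimes>\<^bsub>G\<^esub> (x \<otimes>\<^bsub>G\<^esub> hinv (snd su)) = inv\<^bsub>G\<^esub> x \<otimes>\<^bsub>G\<^esub> (x \<otimes>\<^bsub>G\<^esub> hinv (snd sv))"
    by simp
  then have "hinv (snd su) = hinv (snd sv)"
    using x hinv_car[OF su(2)] hinv_car[OF sv(2)] by (simp only: G.inv_mult_cancel_left)
  then have "snd su = snd sv" using hinv_inj su(2) sv(2) by blast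
  then have "nf_word A (fst su) (snd su) = nf_word A (fst sv) (snd sv)" using fst_eq by simp
  then show ?thesis using nu(1) pres_eq.pe_sym[OF nv(1)] by (auto intro: pres_eq.pe_trans)
qed

text \<open>Evaluation is onto: each g is a word in the \<open>t_p^e\<close> naming its coset, times an element of N.\<close>
lemma evalG_onto: "evalG ` lists E.Y = carrier G"
proof
  show "evalG ` lists E.Y \<subseteq> carrier G" using evalG_car by blast
next
  show "carrier G \<subseteq> evalG ` lists E.Y"
  proof
    fix g assume g: "g \<in> carrier G"
    then have "th (N #>\<^bsub>G\<^esub> g) \<in> carrier (BM I)" using th_car coset_car by blast
    then obtain x where x: "x \<in> lists (B_gens I)" "th (N #>\<^bsub>G\<^esub> g) = clsB I x" by (auto simp: pres_carrier)
    have lx: "map x_letter x \<in> lists E.Y" using x E.x_letters_lists by (auto simp: B_gens_def in_lists_conv_set)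
    define n where "n = g \<otimes>\<^bsub>G\<^esub> inv\<^bsub>G\<^esub> evalG (map x_letter x)"
    have "n \<in> N" unfolding n_def using coset_eq g evalG_car[OF lx] x evalG_x_letters by simp
    then have hn: "h n \<in> carrier A" using h_car by blast
    have "evalG (aword A (h n) @ map x_letter x) = g"
      using evalG_append[OF E.aword_lists[OF hn] lx] evalG_aword[OF hn] hinv_h \<open>n \<in> N\<close> g evalG_car[OF lx]
      unfolding n_def by (simp add: G_simps)
    moreover have "aword A (h n) @ map x_letter x \<in> lists E.Y" using E.aword_lists[OF hn] lx by simp
    ultimately show "g \<in> evalG ` lists E.Y" by (metis image_eqI)
  qed
qed

lemma G_iso_pres: "G \<cong> E.PM"
proof (rule pres_monoid_isoI)
  show "evalG (u @ v) = evalG u \<otimes>\<^bsub>G\<^esub> evalG v" if "u \<in> lists E.Y" "v \<in> lists E.Y" for u v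
    using evalG_append that .
  show "evalG ` lists E.Y = carrier G" by (rule evalG_onto)
  show "evalG u = evalG v \<longleftrightarrow> E.PE u v" if "u \<in> lists E.Y" "v \<in> lists E.Y" for u v
    using evalG_inj[OF that] evalG_PE[of u v] by blast
qed

end

lemma extension_factor_system:
  assumes "group A" "group G" "schreier_ext G A (BM I)"
  shows "\<exists>f psi. factor_system A I f psi \<and> G \<cong> pres_monoid (G_gens A I) (G_rels A I f psi)"
proof -
  obtain N where N: "N \<lhd> G" "G\<lparr>carrier := N\<rparr> \<cong> A" "G Mod N \<cong> BM I"
    using assms(3) unfolding schreier_ext_def by blast
  obtain h where h: "h \<in> iso (G\<lparr>carrier := N\<rparr>) A" using N(2) unfolding is_iso_def by blast
  obtain th where th: "th \<in> iso (G Mod N) (BM I)" using N(3) unfolding is_iso_def by blast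
  interpret extension_data G A I N h th
    by (rule extension_data.intro[OF assms(2,1) extension_data_axioms.intro[OF N(1) h th]])
  show ?thesis using factor_system G_iso_pres by blast
qed

lemma factor_system_iff:
  assumes "group A"
  shows "factor_system A I f psi \<longleftrightarrow>
      (\<forall>p\<in>I. \<forall>q\<in>I. \<forall>e d. p > q \<longrightarrow> f p e q d \<in> carrier A)
     \<and> (\<forall>p\<in>I. \<forall>e. psi p e \<in> iso A A)
     \<and> (\<forall>p\<in>I. \<forall>q\<in>I. \<forall>r\<in>I. \<forall>e d g. p > q \<and> q > r \<longrightarrow>
          f p e q d \<otimes>\<^bsub>A\<^esub> psi q d (f p e r g) \<otimes>\<^bsub>A\<^esub> f q d r g
          = psi p e (f q d r g) \<otimes>\<^bsub>A\<^esub> f p e r g \<otimes>\<^bsub>A\<^esub> psi r g (f p e q d))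
     \<and> (\<forall>p\<in>I. \<forall>q\<in>I. \<forall>e d. p > q \<longrightarrow>
          f p e q (\<not> d) \<otimes>\<^bsub>A\<^esub> psi q (\<not> d) (f p e q d) = \<one>\<^bsub>A\<^esub>)
     \<and> (\<forall>p\<in>I. \<forall>q\<in>I. \<forall>e d. p > q \<longrightarrow>
          psi p (\<not> e) (f p e q d) \<otimes>\<^bsub>A\<^esub> f p (\<not> e) q d = \<one>\<^bsub>A\<^esub>)
     \<and> (\<forall>p\<in>I. \<forall>q\<in>I. \<forall>e d. \<forall>a\<in>carrier A. p > q \<longrightarrow>
          psi p e (psi q d a) \<otimes>\<^bsub>A\<^esub> f p e q d = f p e q d \<otimes>\<^bsub>A\<^esub> psi q d (psi p e a))
     \<and> (\<forall>r\<in>I. \<forall>e. \<forall>a\<in>carrier A. psi r (\<not> e) (psi r e a) = a)"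
    (is "_ \<longleftrightarrow> ?conditions")
proof
  assume "factor_system A I f psi"
  then interpret factor_system A I f psi .
  show ?conditions
    by (intro conjI ballI allI impI; (elim conjE)?; (rule f_car psi_iso c1 c2 c3 c4 c5; assumption))
next
  assume H: ?conditions
  show "factor_system A I f psi"
    using H by (elim conjE) (intro factor_system.intro factor_data.intro factor_data_axioms.intro
        factor_system_axioms.intro assms; simp)
qed

theorem theorem2p6:
  fixes A :: "('a, 'm) monoid_scheme" and G :: "('g, 'n) monoid_scheme"
    and I :: "('i::linorder) set"
  assumes "group A" and "group G"
  shows "schreier_ext G A (pres_monoid (B_gens I) (B_rels I)) \<longleftrightarrow>
    (\<exists>(f :: 'i \<Rightarrow> bool \<Rightarrow> 'i \<Rightarrow> bool \<Rightarrow> 'a) (psi :: 'i \<Rightarrow> bool \<Rightarrow> 'a \<Rightarrow> 'a).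
       (\<forall>p\<in>I. \<forall>q\<in>I. \<forall>e d. p > q \<longrightarrow> f p e q d \<in> carrier A)
     \<and> (\<forall>p\<in>I. \<forall>e. psi p e \<in> iso A A)
     \<and> (\<forall>p\<in>I. \<forall>q\<in>I. \<forall>r\<in>I. \<forall>e d g. p > q \<and> q > r \<longrightarrow>
          f p e q d \<otimes>\<^bsub>A\<^esub> psi q d (f p e r g) \<otimes>\<^bsub>A\<^esub> f q d r g
          = psi p e (f q d r g) \<otimes>\<^bsub>A\<^esub> f p e r g \<otimes>\<^bsub>A\<^esub> psi r g (f p e q d))
     \<and> (\<forall>p\<in>I. \<forall>q\<in>I. \<forall>e d. p > q \<longrightarrow>
          f p e q (\<not> d) \<otimes>\<^bsub>A\<^esub> psi q (\<not> d) (f p e q d) = \<one>\<^bsub>A\<^esub>)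
     \<and> (\<forall>p\<in>I. \<forall>q\<in>I. \<forall>e d. p > q \<longrightarrow>
          psi p (\<not> e) (f p e q d) \<otimes>\<^bsub>A\<^esub> f p (\<not> e) q d = \<one>\<^bsub>A\<^esub>)
     \<and> (\<forall>p\<in>I. \<forall>q\<in>I. \<forall>e d. \<forall>a\<in>carrier A. p > q \<longrightarrow>
          psi p e (psi q d a) \<otimes>\<^bsub>A\<^esub> f p e q d = f p e q d \<otimes>\<^bsub>A\<^esub> psi q d (psi p e a))
     \<and> (\<forall>r\<in>I. \<forall>e. \<forall>a\<in>carrier A. psi r (\<not> e) (psi r e a) = a)
     \<and> G \<cong> pres_monoid (G_gens A I) (G_rels A I f psi))"
proof -
  have "schreier_ext G A (BM I) \<longleftrightarrow>
      (\<exists>f psi. factor_system A I f psi \<and> G \<cong> pres_monoid (G_gens A I) (G_rels A I f psi))"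
    using extension_factor_system[OF assms] factor_system.extension[OF _ assms(2)] by blast
  then show ?thesis by (simp only: factor_system_iff[OF assms(1)] conj_assoc)
qed

end
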